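(* Let the data $(x_1,x_2,t,y)$ be generated by the linear-Gaussian model described in the context, with $c_1\neq 0$, $c_2\neq 0$, $c_t\neq 0$ and all noise variances $\sigma_1^2,\sigma_2^2,\sigma_t^2,\sigma_y^2>0$. Consider the linear CEVAE with one-dimensional latent space ($d=1$). Let $(\theta^*,\phi^* )$ be any global maximizer of the population ELBO $\mathcal{L}(\theta,\phi)=\mathbb{E}_{(x,t,y)\sim p}\big[\ell_{\theta,\phi}(x,t,y)\big]$ (the infinite-data limit). Then for every $t\in\mathbb{R}$, the CEVAE causal effect estimate coincides with the true interventional distribution: $p_{\theta^*}(y\mid do(t)) = p(y\mid do(t))$.
   Context: Linear-Gaussian data generating model: $z\sim\mathcal N(0,1)$ is an unobserved confounder; given $z$, the observed variables are independent draws $x_1\mid z\sim\mathcal N(c_1 z,\sigma_1^2)$, $x_2\mid z\sim\mathcal N(c_2 z,\sigma_2^2)$, $t\mid z\sim\mathcal N(c_t z,\sigma_t^2)$, and $y\mid z,t\sim\mathcal N(c_{yz}z+c_{yt}t,\sigma_y^2)$, where $c_\cdot\in\mathbb R$ and $\sigma_\cdot>0$ are fixed parameters. Only $(x,t,y)$ with $x=(x_1,x_2)$ is observed, with joint law $p(x,t,y)$. The true interventional distribution is $p(y\mid do(t))=\int p(y\mid z,t)p(z)\,dz$. CEVAE: a latent variable model with latent $z\in\mathbb R^d$, prior $p(z)=\mathcal N(0,I_d)$, and decoder factorizing as $p_\theta(x,t,y\mid z)=p_\theta(x\mid z)\,p_\theta(t\mid z)\,p_\theta(y\mid z,t)$,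 together with an encoder (variational posterior) $q_\phi(z\mid x,t,y)$. For an observation $(x,t,y)$ its ELBO is $\ell_{\theta,\phi}(x,t,y)=\mathbb E_{q_\phi(z\mid x,t,y)}[\log p_\theta(x\mid z)+\log p_\theta(t\mid z)+\log p_\theta(y\mid z,t)]-\mathrm{KL}[q_\phi(z\mid x,t,y)\,\|\,p(z)]$. The CEVAE causal effect estimate is $p_\theta(y\mid do(t))=\int p_\theta(y\mid z,t)\,p(z)\,dz$. Linear CEVAE: every conditional is Gaussian with mean a linear function (no bias) of its inputs and a single variance parameter shared across all data points: $p_\theta(x_j\mid z)=\mathcal N(\gamma_j^\top z,s_j^2)$ for $j=1,2$, $p_\theta(t\mid z)=\mathcal N(\gamma_t^\top z,s_t^2)$, $p_\theta(y\mid z,t)=\mathcal N(\gamma_{yz}^\top z+\gamma_{yt}t,s_y^2)$, and $q_\phi(z\mid x,t,y)=\mathcal N(A(x_1,x_2,t,y)^\top,\,S)$ with $A$ a $d\times 4$ matrix and $S$ a fixed (data-independent) positive definite covariance (for $d=1$, a single variance). *)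

theory Defs
  imports "HOL-Probability.Probability"
begin

text \<open>Conventions: every Gaussian is parametrised by its mean and its standard
deviation (normal_density mu sigma), the standard deviation being positive.\<close>

record true_model =
  c1 :: real  c2 :: real  ct :: real  cyz :: real  cyt :: real
  sig1 :: real  sig2 :: real  sigt :: real  sigy :: real

definition valid_model :: "true_model \<Rightarrow> bool" where
  "valid_model M \<longleftrightarrow> c1 M \<noteq> 0 \<and> c2 M \<noteq> 0 \<and> ct M \<noteq> 0 \<and>
     sig1 M > 0 \<and> sig2 M > 0 \<and> sigt M > 0 \<and> sigy M > 0"

definition true_joint :: "true_model \<Rightarrow> real \<Rightarrow> real \<Rightarrow> real \<Rightarrow> real \<Rightarrow> real \<Rightarrow> real" where
  "true_joint M z x1 x2 t y =
     std_normal_density z * normal_density (c1 M * z) (sig1 M) x1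
     * normal_density (c2 M * z) (sig2 M) x2 * normal_density (ct M * z) (sigt M) t
     * normal_density (cyz M * z + cyt M * t) (sigy M) y"

definition true_obs_density :: "true_model \<Rightarrow> real \<Rightarrow> real \<Rightarrow> real \<Rightarrow> real \<Rightarrow> real" where
  "true_obs_density M x1 x2 t y = (\<integral>z. true_joint M z x1 x2 t y \<partial>lborel)"

definition true_do :: "true_model \<Rightarrow> real \<Rightarrow> real \<Rightarrow> real" where
  "true_do M t y = (\<integral>z. normal_density (cyz M * z + cyt M * t) (sigy M) y * std_normal_density z \<partial>lborel)"

text \<open>Linear CEVAE with one-dimensional latent space: decoder parameters theta
(gamma's and standard deviations s) and encoder parameters phi
(A = (a1,a2,a3,a4) and the encoder standard deviation sq, i.e. S = sq^2).\<close>
record lin_cevae =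
  g1 :: real  g2 :: real  gt :: real  gyz :: real  gyt :: real
  s1 :: real  s2 :: real  st :: real  sy :: real
  a1 :: real  a2 :: real  a3 :: real  a4 :: real  sq :: real

definition valid_cevae :: "lin_cevae \<Rightarrow> bool" where
  "valid_cevae P \<longleftrightarrow> s1 P > 0 \<and> s2 P > 0 \<and> st P > 0 \<and> sy P > 0 \<and> sq P > 0"

definition enc :: "lin_cevae \<Rightarrow> real \<Rightarrow> real \<Rightarrow> real \<Rightarrow> real \<Rightarrow> real \<Rightarrow> real" where
  "enc P x1 x2 t y z = normal_density (a1 P * x1 + a2 P * x2 + a3 P * t + a4 P * y) (sq P) z"

definition dec_loglik :: "lin_cevae \<Rightarrow> real \<Rightarrow> real \<Rightarrow> real \<Rightarrow> real \<Rightarrow> real \<Rightarrow> real" where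
  "dec_loglik P z x1 x2 t y =
     ln (normal_density (g1 P * z) (s1 P) x1) + ln (normal_density (g2 P * z) (s2 P) x2)
     + ln (normal_density (gt P * z) (st P) t)
     + ln (normal_density (gyz P * z + gyt P * t) (sy P) y)"

definition enc_KL :: "lin_cevae \<Rightarrow> real \<Rightarrow> real \<Rightarrow> real \<Rightarrow> real \<Rightarrow> real" where
  "enc_KL P x1 x2 t y =
     (\<integral>z. enc P x1 x2 t y z * ln (enc P x1 x2 t y z / std_normal_density z) \<partial>lborel)"

definition elbo :: "lin_cevae \<Rightarrow> real \<Rightarrow> real \<Rightarrow> real \<Rightarrow> real \<Rightarrow> real" where
  "elbo P x1 x2 t y =
     (\<integral>z. enc P x1 x2 t y z * dec_loglik P z x1 x2 t y \<partial>lborel) - enc_KL P x1 x2 t y"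

definition pop_elbo :: "true_model \<Rightarrow> lin_cevae \<Rightarrow> real" where
  "pop_elbo M P =
     (\<integral>x1. \<integral>x2. \<integral>t. \<integral>y. true_obs_density M x1 x2 t y * elbo P x1 x2 t y
        \<partial>lborel \<partial>lborel \<partial>lborel \<partial>lborel)"

definition cevae_do :: "lin_cevae \<Rightarrow> real \<Rightarrow> real \<Rightarrow> real" where
  "cevae_do P t y = (\<integral>z. normal_density (gyz P * z + gyt P * t) (sy P) y * std_normal_density z \<partial>lborel)"

end

theory Submission
  imports Defs
begin

text \<open>All expectations in the population ELBO are Gaussian moments, so for the linear CEVAE it is
  \<open>ln S / 2 - \<Sum>\<^sub>j (ln s\<^sub>j + V\<^sub>j / 2 s\<^sub>j\<^sup>2) - u/2\<close> up to a constant, where \<open>S\<close> is the encoder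
  variance, \<open>V\<^sub>j\<close> the expected squared reconstruction error of the \<open>j\<close>-th observed coordinate and
  \<open>u\<close> the second moment of the latent code. Each \<open>s\<^sub>j\<close> contributes at most \<open>-(ln V\<^sub>j + 1)/2\<close>,
  and Hadamard's inequality for the residual covariance gives \<open>S det \<Sigma> \<le> u \<Prod>\<^sub>j V\<^sub>j\<close>, where
  \<open>\<Sigma>\<close> is the covariance of \<open>(x1, x2, t, y)\<close>; with \<open>ln u \<le> u - 1\<close> the ELBO never exceeds the
  negative entropy of the data, which is attained by the true decoder with the exact posterior.
  At a maximiser all these inequalities are tight, which forces \<open>gyt = cyt\<close>, \<open>gyz = \<plusminus>cyz\<close> and
  \<open>sy = sigy\<close>; as the prior of \<open>z\<close> is symmetric, this fixes \<open>p(y | do(t))\<close>.\<close>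

section \<open>Gaussian integrals\<close>

lemma has_bochner_integral_normal_quadratic:
  assumes "0 < \<sigma>"
  shows "has_bochner_integral lborel (\<lambda>x. normal_density \<mu> \<sigma> x * (a + b*x + c*x^2))
           (a + b*\<mu> + c*(\<mu>^2 + \<sigma>^2))"
proof -
  have m0: "has_bochner_integral lborel (normal_density \<mu> \<sigma>) 1"
    using normal_moment_even[OF assms, of \<mu> 0] by simp
  have m2: "has_bochner_integral lborel (\<lambda>x. normal_density \<mu> \<sigma> x * (x - \<mu>)^2) (\<sigma>^2)"
    using normal_moment_even[OF assms, of \<mu> 1] assms by simp
  have "has_bochner_integral lborel
      (\<lambda>x. (a - c*\<mu>^2) * normal_density \<mu> \<sigma> x + (b + 2*c*\<mu>) * (normal_density \<mu> \<sigma> x * x)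
           + c * (normal_density \<mu> \<sigma> x * (x - \<mu>)^2))
      ((a - c*\<mu>^2) * 1 + (b + 2*c*\<mu>) * \<mu> + c * \<sigma>^2)"
    by (intro has_bochner_integral_add has_bochner_integral_mult_right m0 m2 normal_moment_nz_1[OF assms])
  moreover have "(\<lambda>x. (a - c*\<mu>^2) * normal_density \<mu> \<sigma> x + (b + 2*c*\<mu>) * (normal_density \<mu> \<sigma> x * x)
           + c * (normal_density \<mu> \<sigma> x * (x - \<mu>)^2)) = (\<lambda>x. normal_density \<mu> \<sigma> x * (a + b*x + c*x^2))"
    by (simp add: fun_eq_iff algebra_simps power2_eq_square)
  ultimately show ?thesis
    by (simp add: algebra_simps power2_eq_square)
qed

lemma has_bochner_integral_normal_sum_squares:
  assumes "0 < \<sigma>" "finite I"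
  shows "has_bochner_integral lborel
           (\<lambda>w. normal_density \<mu> \<sigma> w * (c + (\<Sum>i\<in>I. k i * (p i + r i * w)^2)))
           (c + (\<Sum>i\<in>I. k i * ((p i + r i * \<mu>)^2 + (r i * \<sigma>)^2)))"
proof -
  have sq: "has_bochner_integral lborel (\<lambda>w. normal_density \<mu> \<sigma> w * (p i + r i * w)^2)
              ((p i + r i * \<mu>)^2 + (r i * \<sigma>)^2)" for i
    using has_bochner_integral_normal_quadratic[OF assms(1), of \<mu> "(p i)^2" "2 * p i * r i" "(r i)^2"]
    by (simp add: power2_eq_square algebra_simps)
  have "has_bochner_integral lborel
      (\<lambda>w. c * normal_density \<mu> \<sigma> w + (\<Sum>i\<in>I. k i * (normal_density \<mu> \<sigma> w * (p i + r i * w)^2)))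
      (c * 1 + (\<Sum>i\<in>I. k i * ((p i + r i * \<mu>)^2 + (r i * \<sigma>)^2)))"
    using normal_moment_even[OF assms(1), of \<mu> 0]
    by (intro has_bochner_integral_add has_bochner_integral_mult_right has_bochner_integral_sum sq)
      simp_all
  then show ?thesis
    by (simp add: algebra_simps sum_distrib_left)
qed

lemma ln_normal_density:
  assumes "0 < \<sigma>"
  shows "ln (normal_density \<mu> \<sigma> x) = - ln (2 * pi) / 2 - ln \<sigma> - (x - \<mu>)^2 / (2 * \<sigma>^2)"
  using assms by (simp add: normal_density_def ln_mult ln_div ln_sqrt power2_eq_square) (simp add: field_simps)

lemma has_bochner_integral_normal_ln_normal:
  assumes "0 < s" "0 < \<sigma>"
  shows "has_bochner_integral lborel (\<lambda>z. normal_density \<mu> \<sigma> z * ln (normal_density (g * z + b) s x))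
           (- ln (2 * pi) / 2 - ln s - ((x - b - g * \<mu>)^2 + (g * \<sigma>)^2) / (2 * s^2))"
proof -
  define A where "A = - ln (2 * pi) / 2 - ln s - (x - b)^2 / (2 * s^2)"
  define B where "B = g * (x - b) / s^2"
  define C where "C = - (g^2) / (2 * s^2)"
  have "ln (normal_density (g * z + b) s x) = A + B * z + C * z^2" for z
    using assms(1) by (simp add: ln_normal_density A_def B_def C_def field_simps power2_eq_square)
  moreover have "A + B * \<mu> + C * (\<mu>^2 + \<sigma>^2)
      = - ln (2 * pi) / 2 - ln s - ((x - b - g * \<mu>)^2 + (g * \<sigma>)^2) / (2 * s^2)"
    using assms(1) by (simp add: A_def B_def C_def field_simps power2_eq_square)
  ultimately show ?thesis
    using has_bochner_integral_normal_quadratic[OF assms(2), of \<mu> A B C] by simp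
qed

lemma integral_normal_ln_ratio_std_normal:
  assumes "0 < \<sigma>"
  shows "(\<integral>z. normal_density \<mu> \<sigma> z * ln (normal_density \<mu> \<sigma> z / std_normal_density z) \<partial>lborel)
       = (\<mu>^2 + \<sigma>^2 - 1) / 2 - ln \<sigma>"
proof -
  define A where "A = - ln \<sigma> - \<mu>^2 / (2 * \<sigma>^2)"
  define B where "B = \<mu> / \<sigma>^2"
  define C where "C = 1 / 2 - 1 / (2 * \<sigma>^2)"
  have "ln (normal_density \<mu> \<sigma> z / std_normal_density z) = A + B * z + C * z^2" for z
    using assms
    by (simp add: ln_divide_pos[OF normal_density_pos[OF assms] normal_density_pos[OF zero_less_one]]
        ln_normal_density A_def B_def C_def field_simps power2_eq_square)
  moreover have "A + B * \<mu> + C * (\<mu>^2 + \<sigma>^2) = (\<mu>^2 + \<sigma>^2 - 1) / 2 - ln \<sigma>"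
    using assms by (simp add: A_def B_def C_def field_simps power2_eq_square)
  ultimately show ?thesis
    using has_bochner_integral_integral_eq[OF has_bochner_integral_normal_quadratic[OF assms, of \<mu> A B C]]
    by simp
qed

lemma normal_density_le: "normal_density \<mu> \<sigma> x \<le> 1 / sqrt (2 * pi * \<sigma>^2)"
  unfolding normal_density_def by (simp add: divide_right_mono)

lemma abs_std_normal_density_mult_le:
  assumes "0 \<le> b" "b \<le> K"
  shows "\<bar>std_normal_density z * b\<bar> \<le> K * std_normal_density z"
  using assms mult_left_mono[OF assms(2) normal_density_nonneg[of 0 1 z]] by (simp add: abs_mult ac_simps)

lemma integral_std_normal_reflect:
  "(\<integral>z. f (- z) * std_normal_density z \<partial>lborel) = (\<integral>z. f z * std_normal_density z \<partial>lborel :: real)"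
  using lborel_integral_real_affine[of "-1" "\<lambda>z. f z * std_normal_density z" 0]
  by (simp add: normal_density_def)

lemma abs_sum_squares_le:
  fixes z w :: real
  shows "\<bar>c + (\<Sum>i\<in>I. k i * (p i + q i * z + r i * w)^2)\<bar>
           \<le> (\<bar>c\<bar> + (\<Sum>i\<in>I. \<bar>k i\<bar> * ((p i)^2 + (q i)^2 + (r i)^2))) * (1 + z^2 + w^2)"
proof -
  have cauchy_schwarz: "(p i + q i * z + r i * w)^2 \<le> ((p i)^2 + (q i)^2 + (r i)^2) * (1 + z^2 + w^2)" for i
  proof -
    have "((p i)^2 + (q i)^2 + (r i)^2) * (1 + z^2 + w^2) - (p i + q i * z + r i * w)^2
        = (p i * z - q i)^2 + (p i * w - r i)^2 + (q i * w - r i * z)^2"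
      by (simp add: algebra_simps power2_eq_square)
    then show ?thesis
      by (metis diff_ge_0_iff_ge sum_power2_ge_zero add_nonneg_nonneg zero_le_power2)
  qed
  have "\<bar>c + (\<Sum>i\<in>I. k i * (p i + q i * z + r i * w)^2)\<bar>
      \<le> \<bar>c\<bar> + (\<Sum>i\<in>I. \<bar>k i\<bar> * (p i + q i * z + r i * w)^2)"
    by (rule order_trans[OF abs_triangle_ineq add_left_mono[OF order_trans[OF sum_abs]]])
      (simp add: abs_mult)
  also have "\<dots> \<le> \<bar>c\<bar> * (1 + z^2 + w^2)
      + (\<Sum>i\<in>I. \<bar>k i\<bar> * (((p i)^2 + (q i)^2 + (r i)^2) * (1 + z^2 + w^2)))"
    by (intro add_mono sum_mono mult_left_mono cauchy_schwarz) (auto intro: mult_le_cancel_left1[THEN iffD2])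
  also have "\<dots> = (\<bar>c\<bar> + (\<Sum>i\<in>I. \<bar>k i\<bar> * ((p i)^2 + (q i)^2 + (r i)^2))) * (1 + z^2 + w^2)"
    by (simp add: distrib_right sum_distrib_right mult.assoc)
  finally show ?thesis .
qed

lemma integral_normal_mixture_swap:
  fixes g :: "real \<Rightarrow> real \<Rightarrow> real"
  assumes \<sigma>: "0 < \<sigma>"
    and A[measurable]: "A \<in> borel_measurable borel" and A_bound: "\<And>z. \<bar>A z\<bar> \<le> K * std_normal_density z"
    and g[measurable]: "case_prod g \<in> borel_measurable (lborel \<Otimes>\<^sub>M lborel)"
    and g_bound: "\<And>z w. \<bar>g z w\<bar> \<le> C * (1 + z^2 + w^2)"
  shows "(\<integral>w. (\<integral>z. A z * (normal_density (\<alpha>*z + \<beta>) \<sigma> w * g z w) \<partial>lborel) \<partial>lborel)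
       = (\<integral>z. A z * (\<integral>w. normal_density (\<alpha>*z + \<beta>) \<sigma> w * g z w \<partial>lborel) \<partial>lborel)"
proof -
  define f where "f z w = A z * (normal_density (\<alpha>*z + \<beta>) \<sigma> w * g z w)" for z w
  have [measurable]: "(\<lambda>x. g (fst x) (snd x)) \<in> borel_measurable (lborel \<Otimes>\<^sub>M lborel)"
    using g by (simp add: case_prod_beta')
  have f_meas[measurable]: "case_prod f \<in> borel_measurable (lborel \<Otimes>\<^sub>M lborel)"
    unfolding f_def normal_density_def by measurable
  have C: "0 \<le> C"
    using g_bound[of 0 0] by simp
  have dom_integral: "has_bochner_integral lborel (\<lambda>w. normal_density (\<alpha>*z + \<beta>) \<sigma> w * (1 + z^2 + w^2))
      (1 + z^2 + (\<alpha>*z + \<beta>)^2 + \<sigma>^2)" for z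
    using has_bochner_integral_normal_quadratic[OF \<sigma>, of "\<alpha>*z + \<beta>" "1 + z^2" 0 1] by (simp add: add.assoc)
  have f_bound: "\<bar>f z w\<bar> \<le> \<bar>A z\<bar> * C * (normal_density (\<alpha>*z + \<beta>) \<sigma> w * (1 + z^2 + w^2))"
    for z w
  proof -
    have "\<bar>f z w\<bar> = \<bar>A z\<bar> * (normal_density (\<alpha>*z + \<beta>) \<sigma> w * \<bar>g z w\<bar>)"
      by (simp add: f_def abs_mult)
    also have "\<dots> \<le> \<bar>A z\<bar> * (normal_density (\<alpha>*z + \<beta>) \<sigma> w * (C * (1 + z^2 + w^2)))"
      by (intro mult_left_mono g_bound) simp_all
    finally show ?thesis
      by (simp add: ac_simps)
  qed
  have f_int: "integrable lborel (f z)" for z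
  proof (rule Bochner_Integration.integrable_bound)
    show "integrable lborel (\<lambda>w. \<bar>A z\<bar> * C * (normal_density (\<alpha>*z + \<beta>) \<sigma> w * (1 + z^2 + w^2)))"
      by (intro integrable_mult_right integrable.intros[OF dom_integral])
  qed (use f_bound in \<open>auto simp: f_def intro!: AE_I2 order_trans[OF _ abs_ge_self]\<close>)
  define h where "h z = K * C * (std_normal_density z * ((1 + \<beta>^2 + \<sigma>^2) + (2*\<alpha>*\<beta>)*z + (1 + \<alpha>^2)*z^2))" for z
  have h_int: "integrable lborel h"
    unfolding h_def
    by (intro integrable_mult_right integrable.intros[OF has_bochner_integral_normal_quadratic]) simp
  have "integrable lborel (\<lambda>z. \<integral>w. norm (f z w) \<partial>lborel)"
  proof (rule Bochner_Integration.integrable_bound[OF h_int])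
    show "AE z in lborel. norm (\<integral>w. norm (f z w) \<partial>lborel) \<le> norm (h z)"
    proof (rule AE_I2)
      fix z
      have "(\<integral>w. norm (f z w) \<partial>lborel)
          \<le> (\<integral>w. \<bar>A z\<bar> * C * (normal_density (\<alpha>*z + \<beta>) \<sigma> w * (1 + z^2 + w^2)) \<partial>lborel)"
        using f_bound f_int integrable.intros[OF dom_integral[of z]]
        by (intro integral_mono) auto
      also have "\<dots> = \<bar>A z\<bar> * C * (1 + z^2 + (\<alpha>*z + \<beta>)^2 + \<sigma>^2)"
        using has_bochner_integral_integral_eq[OF dom_integral[of z]] by simp
      also have "\<dots> \<le> K * std_normal_density z * C * (1 + z^2 + (\<alpha>*z + \<beta>)^2 + \<sigma>^2)"
        using A_bound[of z] C by (intro mult_right_mono) simp_all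
      also have "\<dots> = h z"
        by (simp add: h_def algebra_simps power2_eq_square)
      finally show "norm (\<integral>w. norm (f z w) \<partial>lborel) \<le> norm (h z)"
        by simp
    qed
  qed simp
  then have "integrable (lborel \<Otimes>\<^sub>M lborel) (case_prod f)"
    using f_int by (intro lborel_pair.Fubini_integrable) simp_all
  then have "(\<integral>w. (\<integral>z. f z w \<partial>lborel) \<partial>lborel) = (\<integral>z. (\<integral>w. f z w \<partial>lborel) \<partial>lborel)"
    by (rule lborel_pair.Fubini_integral)
  then show ?thesis
    by (simp add: f_def)
qed

lemma integral_normal_mixture_sum_squares:
  assumes \<sigma>: "0 < \<sigma>" and I: "finite I"
    and A: "A \<in> borel_measurable borel" and A_bound: "\<And>z. \<bar>A z\<bar> \<le> K * std_normal_density z"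
  shows "(\<integral>w. (\<integral>z. A z * (normal_density (\<alpha>*z + \<beta>) \<sigma> w
              * (c + (\<Sum>i\<in>I. k i * (p i + q i * z + r i * w)^2))) \<partial>lborel) \<partial>lborel)
       = (\<integral>z. A z * ((c + (\<Sum>i\<in>I. k i * (r i * \<sigma>)^2))
              + (\<Sum>i\<in>I. k i * (p i + q i * z + r i * (\<alpha>*z + \<beta>))^2)) \<partial>lborel)"
proof -
  have inner: "(\<integral>w. normal_density (\<alpha>*z + \<beta>) \<sigma> w * (c + (\<Sum>i\<in>I. k i * (p i + q i * z + r i * w)^2)) \<partial>lborel)
      = (c + (\<Sum>i\<in>I. k i * (r i * \<sigma>)^2)) + (\<Sum>i\<in>I. k i * (p i + q i * z + r i * (\<alpha>*z + \<beta>))^2)" for z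
    using has_bochner_integral_integral_eq[OF
        has_bochner_integral_normal_sum_squares[OF \<sigma> I, of "\<alpha>*z + \<beta>" c k "\<lambda>i. p i + q i * z" r]]
    by (simp add: algebra_simps sum.distrib)
  have "(\<lambda>(z, w). c + (\<Sum>i\<in>I. k i * (p i + q i * z + r i * w)^2)) \<in> borel_measurable (lborel \<Otimes>\<^sub>M lborel)"
    by measurable
  then show ?thesis
    unfolding inner[symmetric]
    by (rule integral_normal_mixture_swap[OF \<sigma> A A_bound _ abs_sum_squares_le])
qed

lemma integral_std_normal_mixture_sum_squares:
  assumes \<sigma>: "0 < \<sigma>" and I: "finite I"
    and B: "B \<in> borel_measurable borel" "\<And>z. 0 \<le> B z" "\<And>z. B z \<le> K"
  shows "(\<integral>x. (\<integral>z. std_normal_density z * (B z * normal_density (\<alpha>*z + \<beta>) \<sigma> x)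
              * (c + (\<Sum>i\<in>I. k i * (p i + e i * x + l i * z)^2)) \<partial>lborel) \<partial>lborel)
       = (\<integral>z. std_normal_density z * B z * ((c + (\<Sum>i\<in>I. k i * (e i * \<sigma>)^2))
              + (\<Sum>i\<in>I. k i * ((p i + e i * \<beta>) + (l i + e i * \<alpha>) * z)^2)) \<partial>lborel)"
proof -
  have "(\<integral>x. (\<integral>z. std_normal_density z * (B z * normal_density (\<alpha>*z + \<beta>) \<sigma> x)
              * (c + (\<Sum>i\<in>I. k i * (p i + e i * x + l i * z)^2)) \<partial>lborel) \<partial>lborel)
      = (\<integral>x. (\<integral>z. (std_normal_density z * B z) * (normal_density (\<alpha>*z + \<beta>) \<sigma> x
              * (c + (\<Sum>i\<in>I. k i * (p i + l i * z + e i * x)^2))) \<partial>lborel) \<partial>lborel)"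
    by (simp add: ac_simps)
  also have "\<dots> = (\<integral>z. (std_normal_density z * B z) * ((c + (\<Sum>i\<in>I. k i * (e i * \<sigma>)^2))
              + (\<Sum>i\<in>I. k i * (p i + l i * z + e i * (\<alpha>*z + \<beta>))^2)) \<partial>lborel)"
    using B abs_std_normal_density_mult_le[OF B(2,3)]
    by (intro integral_normal_mixture_sum_squares[OF \<sigma> I]) simp_all
  finally show ?thesis
    by (simp add: algebra_simps)
qed

section \<open>Hadamard's inequality in dimension four\<close>

definition qform3 :: "real \<Rightarrow> real \<Rightarrow> real \<Rightarrow> real \<Rightarrow> real \<Rightarrow> real \<Rightarrow> real \<Rightarrow> real \<Rightarrow> real \<Rightarrow> real" where
  "qform3 m11 m22 m33 m12 m13 m23 t1 t2 t3 =
     m11*t1^2 + m22*t2^2 + m33*t3^2 + 2*m12*t1*t2 + 2*m13*t1*t3 + 2*m23*t2*t3"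

definition det3 :: "real \<Rightarrow> real \<Rightarrow> real \<Rightarrow> real \<Rightarrow> real \<Rightarrow> real \<Rightarrow> real" where
  "det3 m11 m22 m33 m12 m13 m23 =
     m11*(m22*m33 - m23^2) - m12*(m12*m33 - m23*m13) + m13*(m12*m23 - m22*m13)"

definition adj3_form :: "real \<Rightarrow> real \<Rightarrow> real \<Rightarrow> real \<Rightarrow> real \<Rightarrow> real \<Rightarrow> real \<Rightarrow> real \<Rightarrow> real \<Rightarrow> real" where
  "adj3_form m11 m22 m33 m12 m13 m23 p1 p2 p3 =
     (m22*m33 - m23^2)*p1^2 + (m11*m33 - m13^2)*p2^2 + (m11*m22 - m12^2)*p3^2
     - 2*(m12*m33 - m13*m23)*p1*p2 + 2*(m12*m23 - m22*m13)*p1*p3 - 2*(m11*m23 - m12*m13)*p2*p3"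

definition qform4 :: "real \<Rightarrow> real \<Rightarrow> real \<Rightarrow> real \<Rightarrow> real \<Rightarrow> real \<Rightarrow> real \<Rightarrow> real \<Rightarrow> real \<Rightarrow> real
    \<Rightarrow> real \<Rightarrow> real \<Rightarrow> real \<Rightarrow> real \<Rightarrow> real" where
  "qform4 m11 m22 m33 m44 m12 m13 m14 m23 m24 m34 t1 t2 t3 t4 =
     qform3 m11 m22 m33 m12 m13 m23 t1 t2 t3 + m44*t4^2 + 2*(m14*t1 + m24*t2 + m34*t3)*t4"

definition det4 :: "real \<Rightarrow> real \<Rightarrow> real \<Rightarrow> real \<Rightarrow> real \<Rightarrow> real \<Rightarrow> real \<Rightarrow> real \<Rightarrow> real \<Rightarrow> real \<Rightarrow> real" where
  "det4 m11 m22 m33 m44 m12 m13 m14 m23 m24 m34 =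
     m44 * det3 m11 m22 m33 m12 m13 m23 - adj3_form m11 m22 m33 m12 m13 m23 m14 m24 m34"

lemma adj3_identities:
  fixes m11 m22 m33 m12 m13 m23 p1 p2 p3 :: real
  defines "w1 \<equiv> (m22*m33 - m23^2)*p1 - (m12*m33 - m13*m23)*p2 + (m12*m23 - m22*m13)*p3"
    and "w2 \<equiv> - (m12*m33 - m13*m23)*p1 + (m11*m33 - m13^2)*p2 - (m11*m23 - m12*m13)*p3"
    and "w3 \<equiv> (m12*m23 - m22*m13)*p1 - (m11*m23 - m12*m13)*p2 + (m11*m22 - m12^2)*p3"
  shows "qform3 m11 m22 m33 m12 m13 m23 w1 w2 w3
           = det3 m11 m22 m33 m12 m13 m23 * adj3_form m11 m22 m33 m12 m13 m23 p1 p2 p3"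
    and "m11*w1 + m12*w2 + m13*w3 = det3 m11 m22 m33 m12 m13 m23 * p1"
    and "m12*w1 + m22*w2 + m23*w3 = det3 m11 m22 m33 m12 m13 m23 * p2"
    and "m13*w1 + m23*w2 + m33*w3 = det3 m11 m22 m33 m12 m13 m23 * p3"
  unfolding w1_def w2_def w3_def qform3_def det3_def adj3_form_def
  by (simp_all add: algebra_simps power2_eq_square)

lemma hadamard_det3:
  fixes m11 m22 m33 m12 m13 m23 :: real
  assumes pd: "\<And>t1 t2 t3. (t1, t2, t3) \<noteq> (0, 0, 0) \<Longrightarrow> 0 < qform3 m11 m22 m33 m12 m13 m23 t1 t2 t3"
  shows "0 < det3 m11 m22 m33 m12 m13 m23"
    and "det3 m11 m22 m33 m12 m13 m23 \<le> m11 * m22 * m33"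
    and "det3 m11 m22 m33 m12 m13 m23 = m11 * m22 * m33 \<Longrightarrow> m12 = 0 \<and> m13 = 0 \<and> m23 = 0"
proof -
  define E2 where "E2 = m11*m22 - m12^2"
  define E3 where "E3 = det3 m11 m22 m33 m12 m13 m23"
  define r where "r = m22*m13^2 - 2*m12*m13*m23 + m11*m23^2"
  have m11: "0 < m11" and m33: "0 < m33"
    using pd[of 1 0 0] pd[of 0 0 1] by (simp_all add: qform3_def)
  have "m11 * E2 = qform3 m11 m22 m33 m12 m13 m23 (- m12) m11 0"
    by (simp add: E2_def qform3_def algebra_simps power2_eq_square)
  then have "0 < m11 * E2"
    using pd[of "- m12" m11 0] m11 by simp
  then have E2: "0 < E2"
    using m11 by (auto simp: zero_less_mult_iff)
  have "E3 * E2 = qform3 m11 m22 m33 m12 m13 m23 (m12*m23 - m22*m13) (- (m11*m23 - m12*m13)) E2"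
    using adj3_identities(1)[where ?m11.0 = m11 and ?m22.0 = m22 and ?m33.0 = m33 and ?m12.0 = m12
        and ?m13.0 = m13 and ?m23.0 = m23 and ?p1.0 = 0 and ?p2.0 = 0 and ?p3.0 = 1]
    by (simp add: E2_def E3_def adj3_form_def)
  then have "0 < E3 * E2"
    using pd[of _ _ E2] E2 by simp
  then show E3: "0 < det3 m11 m22 m33 m12 m13 m23"
    using E2 unfolding E3_def[symmetric] by (auto simp: zero_less_mult_iff)
  have r_eq: "m33 * E2 = E3 + r"
    by (simp add: E2_def E3_def r_def det3_def algebra_simps power2_eq_square)
  have r_m11: "m11 * r = (m11*m23 - m12*m13)^2 + E2 * m13^2"
    by (simp add: r_def E2_def algebra_simps power2_eq_square)
  then have r: "0 \<le> r"
    using m11 E2 by (metis zero_le_mult_iff add_nonneg_nonneg zero_le_power2 less_le_not_le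
        mult_nonneg_nonneg order_less_imp_le)
  have "E3 \<le> m33 * E2" "m33 * E2 \<le> m11 * m22 * m33"
    using r_eq r m33 by (simp_all add: E2_def algebra_simps)
  then show "det3 m11 m22 m33 m12 m13 m23 \<le> m11 * m22 * m33"
    unfolding E3_def by linarith
  assume "det3 m11 m22 m33 m12 m13 m23 = m11 * m22 * m33"
  then have "r + m33 * m12^2 = 0"
    using r_eq by (simp add: E3_def E2_def algebra_simps)
  then have "r = 0" "m33 * m12^2 = 0"
    using r m33 by (simp_all add: add_nonneg_eq_0_iff)
  then have "m13 = 0" "m11*m23 - m12*m13 = 0" "m12 = 0"
    using r_m11 E2 m33 by (simp_all add: add_nonneg_eq_0_iff)
  then show "m12 = 0 \<and> m13 = 0 \<and> m23 = 0"
    using m11 by simp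
qed

lemma hadamard_det4:
  fixes m11 m22 m33 m44 m12 m13 m14 m23 m24 m34 :: real
  assumes pd: "\<And>t1 t2 t3 t4. (t1, t2, t3, t4) \<noteq> (0, 0, 0, 0) \<Longrightarrow>
      0 < qform4 m11 m22 m33 m44 m12 m13 m14 m23 m24 m34 t1 t2 t3 t4"
  shows "det4 m11 m22 m33 m44 m12 m13 m14 m23 m24 m34 \<le> m11 * m22 * m33 * m44"
    and "det4 m11 m22 m33 m44 m12 m13 m14 m23 m24 m34 = m11 * m22 * m33 * m44 \<Longrightarrow>
      m12 = 0 \<and> m13 = 0 \<and> m14 = 0 \<and> m23 = 0 \<and> m24 = 0 \<and> m34 = 0"
proof -
  have pd3: "0 < qform3 m11 m22 m33 m12 m13 m23 t1 t2 t3" if "(t1, t2, t3) \<noteq> (0, 0, 0)" for t1 t2 t3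
    using pd[of t1 t2 t3 0] that by (simp add: qform4_def)
  have qform3_nonneg: "0 \<le> qform3 m11 m22 m33 m12 m13 m23 t1 t2 t3" for t1 t2 t3
    using pd3[of t1 t2 t3] by (cases "(t1, t2, t3) = (0, 0, 0)") (auto simp: qform3_def)
  define E3 where "E3 = det3 m11 m22 m33 m12 m13 m23"
  define a where "a = adj3_form m11 m22 m33 m12 m13 m23 m14 m24 m34"
  define w1 where "w1 = (m22*m33 - m23^2)*m14 - (m12*m33 - m13*m23)*m24 + (m12*m23 - m22*m13)*m34"
  define w2 where "w2 = - (m12*m33 - m13*m23)*m14 + (m11*m33 - m13^2)*m24 - (m11*m23 - m12*m13)*m34"
  define w3 where "w3 = (m12*m23 - m22*m13)*m14 - (m11*m23 - m12*m13)*m24 + (m11*m22 - m12^2)*m34"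
  note adj = adj3_identities[where ?m11.0 = m11 and ?m22.0 = m22 and ?m33.0 = m33 and ?m12.0 = m12
      and ?m13.0 = m13 and ?m23.0 = m23 and ?p1.0 = m14 and ?p2.0 = m24 and ?p3.0 = m34, folded w1_def w2_def w3_def E3_def]
  have E3: "0 < E3" "E3 \<le> m11 * m22 * m33"
    using hadamard_det3(1,2)[OF pd3] by (simp_all add: E3_def)
  have m44: "0 < m44"
    using pd[of 0 0 0 1] by (simp add: qform4_def qform3_def)
  have "0 \<le> E3 * a"
    using adj(1) qform3_nonneg[of w1 w2 w3] by (simp add: a_def)
  then have a: "0 \<le> a"
    using E3(1) by (simp add: zero_le_mult_iff)
  have det4_eq: "det4 m11 m22 m33 m44 m12 m13 m14 m23 m24 m34 = m44 * E3 - a"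
    by (simp add: det4_def E3_def a_def)
  have "m44 * E3 \<le> m11 * m22 * m33 * m44"
    using E3(2) m44 by (simp add: mult.commute)
  then show "det4 m11 m22 m33 m44 m12 m13 m14 m23 m24 m34 \<le> m11 * m22 * m33 * m44"
    unfolding det4_eq using a by linarith
  assume "det4 m11 m22 m33 m44 m12 m13 m14 m23 m24 m34 = m11 * m22 * m33 * m44"
  then have "a = 0" "m44 * E3 = m44 * (m11 * m22 * m33)"
    using \<open>m44 * E3 \<le> m11 * m22 * m33 * m44\<close> a unfolding det4_eq by (simp_all add: algebra_simps)
  then have off3: "m12 = 0 \<and> m13 = 0 \<and> m23 = 0" and "qform3 m11 m22 m33 m12 m13 m23 w1 w2 w3 = 0"
    using hadamard_det3(3)[OF pd3] m44 adj(1) by (simp_all add: E3_def a_def)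
  then have "w1 = 0" "w2 = 0" "w3 = 0"
    using pd3[of w1 w2 w3] by auto
  then have "m14 = 0" "m24 = 0" "m34 = 0"
    using adj(2-4) E3(1) by simp_all
  with off3 show "m12 = 0 \<and> m13 = 0 \<and> m14 = 0 \<and> m23 = 0 \<and> m24 = 0 \<and> m34 = 0"
    by simp
qed

lemma det4_shear:
  "det4 m11 m22 m33 (m44 + 2*d*m34 + d^2*m33) m12 m13 (m14 + d*m13) m23 (m24 + d*m23) (m34 + d*m33)
     = det4 m11 m22 m33 m44 m12 m13 m14 m23 m24 m34"
  by (simp add: det4_def det3_def adj3_form_def algebra_simps power2_eq_square)

lemma qform4_shear:
  "qform4 m11 m22 m33 (m44 + 2*d*m34 + d^2*m33) m12 m13 (m14 + d*m13) m23 (m24 + d*m23) (m34 + d*m33)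
     t1 t2 t3 t4 = qform4 m11 m22 m33 m44 m12 m13 m14 m23 m24 m34 t1 t2 (t3 + d*t4) t4"
  by (simp add: qform4_def qform3_def algebra_simps power2_eq_square)

lemma det4_identity_plus_rank_one_minus_rank_one:
  "det4 (1 + l1^2 - b1^2) (1 + l2^2 - b2^2) (1 + l3^2 - b3^2) (1 + l4^2 - b4^2)
     (l1*l2 - b1*b2) (l1*l3 - b1*b3) (l1*l4 - b1*b4) (l2*l3 - b2*b3) (l2*l4 - b2*b4) (l3*l4 - b3*b4)
   = (1 + l1^2 + l2^2 + l3^2 + l4^2) * (1 - (b1^2 + b2^2 + b3^2 + b4^2)) + (l1*b1 + l2*b2 + l3*b3 + l4*b4)^2"
  by (simp add: det4_def det3_def adj3_form_def algebra_simps power2_eq_square)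

lemma cauchy_schwarz5:
  fixes a0 a1 a2 a3 a4 b0 b1 b2 b3 b4 :: real
  shows "(a0*b0 + a1*b1 + a2*b2 + a3*b3 + a4*b4)^2
           \<le> (a0^2 + a1^2 + a2^2 + a3^2 + a4^2) * (b0^2 + b1^2 + b2^2 + b3^2 + b4^2)"
proof -
  have "(a0^2 + a1^2 + a2^2 + a3^2 + a4^2) * (b0^2 + b1^2 + b2^2 + b3^2 + b4^2)
        - (a0*b0 + a1*b1 + a2*b2 + a3*b3 + a4*b4)^2
      = (a0*b1 - a1*b0)^2 + (a0*b2 - a2*b0)^2 + (a0*b3 - a3*b0)^2 + (a0*b4 - a4*b0)^2
        + (a1*b2 - a2*b1)^2 + (a1*b3 - a3*b1)^2 + (a1*b4 - a4*b1)^2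
        + (a2*b3 - a3*b2)^2 + (a2*b4 - a4*b2)^2 + (a3*b4 - a4*b3)^2"
    by (simp add: algebra_simps power2_eq_square)
  moreover have "0 \<le> (a0*b1 - a1*b0)^2 + (a0*b2 - a2*b0)^2 + (a0*b3 - a3*b0)^2 + (a0*b4 - a4*b0)^2
        + (a1*b2 - a2*b1)^2 + (a1*b3 - a3*b1)^2 + (a1*b4 - a4*b1)^2
        + (a2*b3 - a3*b2)^2 + (a2*b4 - a4*b2)^2 + (a3*b4 - a4*b3)^2"
    by simp
  ultimately show ?thesis
    by linarith
qed

lemma rank_one_products_eq:
  fixes l1 l2 l3 l4 b1 b2 b3 b4 :: real
  assumes l: "l1 \<noteq> 0" "l2 \<noteq> 0" "l3 \<noteq> 0"
    and b: "b1*b2 = l1*l2" "b1*b3 = l1*l3" "b2*b3 = l2*l3" "b1*b4 = l1*l4"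
  shows "b3^2 = l3^2" "b3*b4 = l3*l4" "b4^2 = l4^2"
proof -
  have "b1^2 * (l2*l3) = l1^2 * (l2*l3)"
    using b(1,2,3) by (metis power2_eq_square mult.assoc mult.left_commute)
  then have b1: "b1^2 = l1^2"
    using l by simp
  have "b3^2 * (l1*l2) = l3^2 * (l1*l2)"
    using b(1,2,3) by (metis power2_eq_square mult.assoc mult.left_commute mult.commute)
  then show "b3^2 = l3^2"
    using l by simp
  have "(b3*b4) * b1^2 = (l3*l4) * b1^2"
    using b(2,4) b1 by (metis power2_eq_square mult.assoc mult.left_commute mult.commute)
  then show "b3*b4 = l3*l4"
    using b1 l by simp
  have "b4^2 * b1^2 = l4^2 * b1^2"
    using b(4) b1 by (metis power_mult_distrib mult.commute)
  then show "b4^2 = l4^2"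
    using b1 l by simp
qed

lemma cross_moment_sq_less:
  fixes l1 l2 l3 l4 q1 q2 q3 q4 S w1 w2 w3 w4 :: real
  assumes S: "0 < S" and w: "(w1, w2, w3, w4) \<noteq> (0, 0, 0, 0)"
  defines "\<alpha> \<equiv> l1*q1 + l2*q2 + l3*q3 + l4*q4"
  shows "((l1*\<alpha> + q1)*w1 + (l2*\<alpha> + q2)*w2 + (l3*\<alpha> + q3)*w3 + (l4*\<alpha> + q4)*w4)^2
    < (\<alpha>^2 + q1^2 + q2^2 + q3^2 + q4^2 + S) * (w1^2 + w2^2 + w3^2 + w4^2 + (l1*w1 + l2*w2 + l3*w3 + l4*w4)^2)"
proof -
  define T where "T = w1^2 + w2^2 + w3^2 + w4^2 + (l1*w1 + l2*w2 + l3*w3 + l4*w4)^2"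
  have "0 < w1^2 + w2^2 + w3^2 + w4^2"
    using w by (auto simp: add_pos_nonneg add_nonneg_pos)
  then have T: "0 < T"
    unfolding T_def by (simp add: add_pos_nonneg)
  have "((l1*\<alpha> + q1)*w1 + (l2*\<alpha> + q2)*w2 + (l3*\<alpha> + q3)*w3 + (l4*\<alpha> + q4)*w4)^2
      \<le> (\<alpha>^2 + q1^2 + q2^2 + q3^2 + q4^2) * T"
    using cauchy_schwarz5[of \<alpha> "l1*w1 + l2*w2 + l3*w3 + l4*w4" q1 w1 q2 w2 q3 w3 q4 w4]
    by (simp add: T_def algebra_simps)
  also have "\<dots> < (\<alpha>^2 + q1^2 + q2^2 + q3^2 + q4^2 + S) * T"
    using S T by (simp add: distrib_right)
  finally show ?thesis
    unfolding T_def .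
qed

lemma rank_one_schur_identity:
  fixes l1 l2 l3 l4 q1 q2 q3 q4 S :: real
  defines "\<alpha> \<equiv> l1*q1 + l2*q2 + l3*q3 + l4*q4"
  shows "(1 + l1^2 + l2^2 + l3^2 + l4^2)
           * ((\<alpha>^2 + q1^2 + q2^2 + q3^2 + q4^2 + S)
              - ((l1*\<alpha> + q1)^2 + (l2*\<alpha> + q2)^2 + (l3*\<alpha> + q3)^2 + (l4*\<alpha> + q4)^2))
         + (l1*(l1*\<alpha> + q1) + l2*(l2*\<alpha> + q2) + l3*(l3*\<alpha> + q3) + l4*(l4*\<alpha> + q4))^2
       = S * (1 + l1^2 + l2^2 + l3^2 + l4^2)"
proof -
  have sq: "(l1*\<alpha> + q1)^2 + (l2*\<alpha> + q2)^2 + (l3*\<alpha> + q3)^2 + (l4*\<alpha> + q4)^2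
      = \<alpha>^2 * (l1^2 + l2^2 + l3^2 + l4^2) + 2 * \<alpha>^2 + (q1^2 + q2^2 + q3^2 + q4^2)"
    by (simp add: power2_sum power_mult_distrib algebra_simps) (simp add: \<alpha>_def power2_eq_square algebra_simps)
  have lin: "l1*(l1*\<alpha> + q1) + l2*(l2*\<alpha> + q2) + l3*(l3*\<alpha> + q3) + l4*(l4*\<alpha> + q4)
      = \<alpha> * (1 + l1^2 + l2^2 + l3^2 + l4^2)"
    by (simp add: \<alpha>_def algebra_simps power2_eq_square)
  show ?thesis
    unfolding sq lin by (simp add: algebra_simps power2_eq_square)
qed

text \<open>In coordinates \<open>v\<close> in which the data covariance is \<open>I + l l\<^sup>T\<close>, the encoder mean is
  \<open>q \<bullet> v\<close> with noise variance \<open>S\<close>, \<open>u\<close> is its second moment, \<open>k\<close> its covariance with \<open>v\<close>, and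
  \<open>N1, \<dots>, N4\<close> are the reconstruction errors of the decoder \<open>h\<close>; \<open>d\<close> shears \<open>v4\<close> to \<open>v4 + d v3\<close>.
  The bound is Hadamard's inequality for the covariance \<open>I + l l\<^sup>T - k k\<^sup>T / u\<close> of the residuals.\<close>
lemma moment_product_ge:
  fixes l1 l2 l3 l4 q1 q2 q3 q4 S h1 h2 h3 h4 d :: real
  assumes S: "0 < S"
  defines "\<alpha> \<equiv> l1*q1 + l2*q2 + l3*q3 + l4*q4"
  defines "u \<equiv> \<alpha>^2 + q1^2 + q2^2 + q3^2 + q4^2 + S"
  defines "k1 \<equiv> l1*\<alpha> + q1" and "k2 \<equiv> l2*\<alpha> + q2" and "k3 \<equiv> l3*\<alpha> + q3" and "k4 \<equiv> l4*\<alpha> + q4"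
  defines "N1 \<equiv> 1 + l1^2 - 2*h1*k1 + h1^2*u"
    and "N2 \<equiv> 1 + l2^2 - 2*h2*k2 + h2^2*u"
    and "N3 \<equiv> 1 + l3^2 - 2*h3*k3 + h3^2*u"
    and "N4 \<equiv> (1 + l4^2) + 2*d*l4*l3 + d^2*(1 + l3^2) - 2*h4*(k4 + d*k3) + h4^2*u"
  shows "0 < u \<and> 0 < N1 \<and> 0 < N2 \<and> 0 < N3 \<and> 0 < N4"
    and "S * (1 + l1^2 + l2^2 + l3^2 + l4^2) \<le> u * (N1 * N2 * N3 * N4)"
    and "u * (N1 * N2 * N3 * N4) = S * (1 + l1^2 + l2^2 + l3^2 + l4^2) \<Longrightarrow>
      l1 \<noteq> 0 \<Longrightarrow> l2 \<noteq> 0 \<Longrightarrow> l3 \<noteq> 0 \<Longrightarrow> d = 0 \<and> h4^2 * u = l4^2 \<and> N4 = 1"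
proof -
  have u: "0 < u"
    using S by (simp add: u_def add_nonneg_pos)
  define v where "v = sqrt u"
  have v: "0 < v" "v^2 = u"
    using u by (simp_all add: v_def)
  define b1 where "b1 = k1 / v"
  define b2 where "b2 = k2 / v"
  define b3 where "b3 = k3 / v"
  define b4 where "b4 = k4 / v"
  have k: "k1 = b1 * v" "k2 = b2 * v" "k3 = b3 * v" "k4 = b4 * v"
    using v by (simp_all add: b1_def b2_def b3_def b4_def)
  define m11 where "m11 = 1 + l1^2 - b1^2"
  define m22 where "m22 = 1 + l2^2 - b2^2"
  define m33 where "m33 = 1 + l3^2 - b3^2"
  define m44 where "m44 = 1 + l4^2 - b4^2"
  define m12 where "m12 = l1*l2 - b1*b2"
  define m13 where "m13 = l1*l3 - b1*b3"
  define m14 where "m14 = l1*l4 - b1*b4"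
  define m23 where "m23 = l2*l3 - b2*b3"
  define m24 where "m24 = l2*l4 - b2*b4"
  define m34 where "m34 = l3*l4 - b3*b4"
  note m_defs = m11_def m22_def m33_def m44_def m12_def m13_def m14_def m23_def m24_def m34_def
  define G where "G = m44 + 2*d*m34 + d^2*m33"
  define Q where "Q = qform4 m11 m22 m33 G m12 m13 (m14 + d*m13) m23 (m24 + d*m23) (m34 + d*m33)"
  have Q_shear: "Q t1 t2 t3 t4 = qform4 m11 m22 m33 m44 m12 m13 m14 m23 m24 m34 t1 t2 (t3 + d*t4) t4"
    for t1 t2 t3 t4
    unfolding Q_def G_def by (rule qform4_shear)
  have form_eq: "u * qform4 m11 m22 m33 m44 m12 m13 m14 m23 m24 m34 w1 w2 w3 w4
      = u * (w1^2 + w2^2 + w3^2 + w4^2 + (l1*w1 + l2*w2 + l3*w3 + l4*w4)^2)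
        - (k1*w1 + k2*w2 + k3*w3 + k4*w4)^2" for w1 w2 w3 w4
    unfolding k m_defs qform4_def qform3_def v(2)[symmetric] by (simp add: algebra_simps power2_eq_square)
  have cross_less: "(k1*w1 + k2*w2 + k3*w3 + k4*w4)^2
      < u * (w1^2 + w2^2 + w3^2 + w4^2 + (l1*w1 + l2*w2 + l3*w3 + l4*w4)^2)"
    if "(w1, w2, w3, w4) \<noteq> (0, 0, 0, 0)" for w1 w2 w3 w4
    unfolding k1_def k2_def k3_def k4_def u_def \<alpha>_def by (rule cross_moment_sq_less[OF S that])
  have Q_pos: "0 < Q t1 t2 t3 t4" if "(t1, t2, t3, t4) \<noteq> (0, 0, 0, 0)" for t1 t2 t3 t4
  proof -
    have "(t1, t2, t3 + d*t4, t4) \<noteq> (0, 0, 0, 0)"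
      using that by auto
    then have "0 < u * Q t1 t2 t3 t4"
      unfolding Q_shear form_eq using cross_less by simp
    then show ?thesis
      using u by (simp add: zero_less_mult_iff)
  qed
  note hadamard = hadamard_det4[of m11 m22 m33 G m12 m13 "m14 + d*m13" m23 "m24 + d*m23" "m34 + d*m33",
      folded Q_def, OF Q_pos]
  have diag_pos: "0 < m11" "0 < m22" "0 < m33" "0 < G"
    using Q_pos[of 1 0 0 0] Q_pos[of 0 1 0 0] Q_pos[of 0 0 1 0] Q_pos[of 0 0 0 1]
    by (simp_all add: Q_def qform4_def qform3_def)
  have N_eq: "N1 = m11 + (h1 * v - b1)^2" "N2 = m22 + (h2 * v - b2)^2" "N3 = m33 + (h3 * v - b3)^2"
      "N4 = G + (h4 * v - (b4 + d*b3))^2"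
    unfolding N1_def N2_def N3_def N4_def G_def m_defs k v(2)[symmetric]
    by (simp_all add: algebra_simps power2_eq_square)
  have N_ge: "m11 \<le> N1" "m22 \<le> N2" "m33 \<le> N3" "G \<le> N4"
    unfolding N_eq by simp_all
  then have N_pos: "0 < N1" "0 < N2" "0 < N3" "0 < N4"
    using diag_pos by linarith+
  then show "0 < u \<and> 0 < N1 \<and> 0 < N2 \<and> 0 < N3 \<and> 0 < N4"
    using u by simp
  have diag_le: "m11 * m22 * m33 * G \<le> N1 * N2 * N3 * N4"
    using N_ge diag_pos by (intro mult_mono) (auto intro: mult_nonneg_nonneg)
  define D where "D = det4 m11 m22 m33 G m12 m13 (m14 + d*m13) m23 (m24 + d*m23) (m34 + d*m33)"
  have uD: "u * D = S * (1 + l1^2 + l2^2 + l3^2 + l4^2)"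
  proof -
    have "D = (1 + l1^2 + l2^2 + l3^2 + l4^2) * (1 - (b1^2 + b2^2 + b3^2 + b4^2))
        + (l1*b1 + l2*b2 + l3*b3 + l4*b4)^2"
      unfolding D_def G_def det4_shear m_defs by (rule det4_identity_plus_rank_one_minus_rank_one)
    then have "u * D = v^2 * ((1 + l1^2 + l2^2 + l3^2 + l4^2) * (1 - (b1^2 + b2^2 + b3^2 + b4^2))
        + (l1*b1 + l2*b2 + l3*b3 + l4*b4)^2)"
      using v(2) by simp
    also have "\<dots> = (1 + l1^2 + l2^2 + l3^2 + l4^2) * (v^2 - ((b1 * v)^2 + (b2 * v)^2 + (b3 * v)^2 + (b4 * v)^2))
        + (l1*(b1 * v) + l2*(b2 * v) + l3*(b3 * v) + l4*(b4 * v))^2"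
      by (simp add: algebra_simps power2_eq_square)
    finally show ?thesis
      unfolding k[symmetric] v(2) u_def k1_def k2_def k3_def k4_def \<alpha>_def rank_one_schur_identity .
  qed
  have D_le: "D \<le> N1 * N2 * N3 * N4"
    using hadamard(1) diag_le by (simp add: D_def)
  then show "S * (1 + l1^2 + l2^2 + l3^2 + l4^2) \<le> u * (N1 * N2 * N3 * N4)"
    using u uD by (metis mult_left_mono less_imp_le)
  assume eq: "u * (N1 * N2 * N3 * N4) = S * (1 + l1^2 + l2^2 + l3^2 + l4^2)"
    and l: "l1 \<noteq> 0" "l2 \<noteq> 0" "l3 \<noteq> 0"
  have "u * (N1 * N2 * N3 * N4) = u * D"
    using eq uD by simp
  then have "N1 * N2 * N3 * N4 = D"
    using u by simp
  then have "D = m11 * m22 * m33 * G" and prod_eq: "m11 * m22 * m33 * G = N1 * N2 * N3 * N4"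
    using hadamard(1) diag_le by (simp_all add: D_def)
  then have off: "m12 = 0" "m13 = 0" "m14 = 0" "m23 = 0" "m34 + d*m33 = 0"
    using hadamard(2)[folded D_def] by auto
  have "N4 = G"
  proof -
    have "m11 * m22 * m33 * G \<le> m11 * m22 * m33 * N4" "m11 * m22 * m33 * N4 \<le> N1 * N2 * N3 * N4"
      using N_ge N_pos diag_pos by (auto intro!: mult_mono mult_nonneg_nonneg)
    then have "m11 * m22 * m33 * N4 = m11 * m22 * m33 * G"
      using prod_eq by linarith
    then show ?thesis
      using diag_pos by simp
  qed
  have "b1*b2 = l1*l2" "b1*b3 = l1*l3" "b2*b3 = l2*l3" "b1*b4 = l1*l4"
    using off by (simp_all add: m_defs)
  note rank_one = rank_one_products_eq[OF l this]
  then have "m33 = 1" "m34 = 0" "m44 = 1"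
    by (simp_all add: m_defs)
  then have "d = 0"
    using off(5) by simp
  then have "N4 = 1" "h4 * v = b4"
    using \<open>N4 = G\<close> N_eq(4) \<open>m44 = 1\<close> by (simp_all add: G_def)
  then show "d = 0 \<and> h4^2 * u = l4^2 \<and> N4 = 1"
    using \<open>d = 0\<close> rank_one(3) v(2) by (metis power_mult_distrib)
qed

section \<open>The population ELBO in closed form\<close>

text \<open>The form \<open>a x1 + b x2 + c t + d y\<close> equals
  \<open>(a c1 + b c2 + (c + d cyt) ct + d cyz) z\<close> plus independent Gaussian noise.\<close>
definition lin_second_moment :: "true_model \<Rightarrow> real \<Rightarrow> real \<Rightarrow> real \<Rightarrow> real \<Rightarrow> real" where
  "lin_second_moment M a b c d =
     (a * c1 M + b * c2 M + (c + d * cyt M) * ct M + d * cyz M)^2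
     + (a * sig1 M)^2 + (b * sig2 M)^2 + ((c + d * cyt M) * sigt M)^2 + (d * sigy M)^2"

lemma integral_true_obs_density_sum_squares:
  assumes M: "valid_model M" and I: "finite I"
  shows "(\<integral>y. true_obs_density M x1 x2 t y * (c + (\<Sum>i\<in>I. k i * (p i + ey i * y)^2)) \<partial>lborel)
    = (\<integral>z. std_normal_density z * (normal_density (c1 M * z) (sig1 M) x1
          * normal_density (c2 M * z) (sig2 M) x2 * normal_density (ct M * z) (sigt M) t)
        * ((c + (\<Sum>i\<in>I. k i * (ey i * sigy M)^2))
          + (\<Sum>i\<in>I. k i * ((p i + ey i * (cyt M * t)) + (0 + ey i * cyz M) * z)^2)) \<partial>lborel)"
proof -
  have \<sigma>: "0 < sig1 M" "0 < sig2 M" "0 < sigt M" "0 < sigy M"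
    using M by (simp_all add: valid_model_def)
  define B where "B z = normal_density (c1 M * z) (sig1 M) x1 * normal_density (c2 M * z) (sig2 M) x2
      * normal_density (ct M * z) (sigt M) t" for z
  have "(\<integral>y. true_obs_density M x1 x2 t y * (c + (\<Sum>i\<in>I. k i * (p i + ey i * y)^2)) \<partial>lborel)
      = (\<integral>y. (\<integral>z. std_normal_density z * (B z * normal_density (cyz M * z + cyt M * t) (sigy M) y)
          * (c + (\<Sum>i\<in>I. k i * (p i + ey i * y + 0 * z)^2)) \<partial>lborel) \<partial>lborel)"
    unfolding true_obs_density_def true_joint_def integral_mult_left_zero[symmetric] B_def
    by (intro Bochner_Integration.integral_cong refl) (simp add: ac_simps)
  also have "\<dots> = (\<integral>z. std_normal_density z * B z * ((c + (\<Sum>i\<in>I. k i * (ey i * sigy M)^2))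
          + (\<Sum>i\<in>I. k i * ((p i + ey i * (cyt M * t)) + (0 + ey i * cyz M) * z)^2)) \<partial>lborel)"
  proof (rule integral_std_normal_mixture_sum_squares[OF \<sigma>(4) I])
    show "B \<in> borel_measurable borel"
      unfolding B_def normal_density_def by measurable
    show "B z \<le> 1 / sqrt (2 * pi * (sig1 M)^2) * (1 / sqrt (2 * pi * (sig2 M)^2))
        * (1 / sqrt (2 * pi * (sigt M)^2))" for z
      unfolding B_def by (intro mult_mono normal_density_le mult_nonneg_nonneg) simp_all
  qed (simp add: B_def)
  finally show ?thesis
    by (simp add: B_def)
qed

lemma true_expectation_sum_squares:
  assumes M: "valid_model M" and I: "finite I"
  shows "(\<integral>x1. \<integral>x2. \<integral>t. \<integral>y. true_obs_density M x1 x2 t y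
            * (c + (\<Sum>i\<in>I. k i * (e1 i * x1 + e2 i * x2 + et i * t + ey i * y)^2))
          \<partial>lborel \<partial>lborel \<partial>lborel \<partial>lborel)
       = c + (\<Sum>i\<in>I. k i * lin_second_moment M (e1 i) (e2 i) (et i) (ey i))"
proof -
  have \<sigma>: "0 < sig1 M" "0 < sig2 M" "0 < sigt M" "0 < sigy M"
    using M by (simp_all add: valid_model_def)
  define N1 where "N1 z x1 = normal_density (c1 M * z) (sig1 M) x1" for z x1
  define N2 where "N2 z x2 = normal_density (c2 M * z) (sig2 M) x2" for z x2
  define Nt where "Nt z t = normal_density (ct M * z) (sigt M) t" for z t
  define bound where "bound \<sigma> = 1 / sqrt (2 * pi * \<sigma>^2)" for \<sigma> :: real
  have N_meas[measurable]: "(\<lambda>z. N1 z x1) \<in> borel_measurable borel" "(\<lambda>z. N2 z x2) \<in> borel_measurable borel"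
    for x1 x2
    unfolding N1_def N2_def normal_density_def by measurable
  have N_nonneg: "0 \<le> N1 z x1" "0 \<le> N2 z x2" for z x1 x2
    by (simp_all add: N1_def N2_def)
  have N_le: "N1 z x1 \<le> bound (sig1 M)" "N2 z x2 \<le> bound (sig2 M)" for z x1 x2
    by (simp_all add: N1_def N2_def bound_def normal_density_le)
  have bound_nonneg: "0 \<le> bound \<sigma>" for \<sigma>
    by (simp add: bound_def)
  note step = integral_std_normal_mixture_sum_squares[OF _ I]
  define ly where "ly i = ey i * cyz M" for i
  define lt where "lt i = ly i + (et i + ey i * cyt M) * ct M" for i
  define l2 where "l2 i = lt i + e2 i * c2 M" for i
  define c_y where "c_y = c + (\<Sum>i\<in>I. k i * (ey i * sigy M)^2)"
  define c_t where "c_t = c_y + (\<Sum>i\<in>I. k i * ((et i + ey i * cyt M) * sigt M)^2)"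
  define c_2 where "c_2 = c_t + (\<Sum>i\<in>I. k i * (e2 i * sig2 M)^2)"
  define c_1 where "c_1 = c_2 + (\<Sum>i\<in>I. k i * (e1 i * sig1 M)^2)"
  have y_level: "(\<integral>y. true_obs_density M x1 x2 t y
        * (c + (\<Sum>i\<in>I. k i * (e1 i * x1 + e2 i * x2 + et i * t + ey i * y)^2)) \<partial>lborel)
    = (\<integral>z. std_normal_density z * (N1 z x1 * N2 z x2 * Nt z t)
        * (c_y + (\<Sum>i\<in>I. k i * ((e1 i * x1 + e2 i * x2 + et i * t + ey i * (cyt M * t)) + ly i * z)^2))
       \<partial>lborel)" for x1 x2 t
    using integral_true_obs_density_sum_squares[OF M I, where p = "\<lambda>i. e1 i * x1 + e2 i * x2 + et i * t"]
    by (simp add: N1_def N2_def Nt_def c_y_def ly_def)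
  have t_level: "(\<integral>t. (\<integral>z. std_normal_density z * (N1 z x1 * N2 z x2 * Nt z t)
        * (c_y + (\<Sum>i\<in>I. k i * ((e1 i * x1 + e2 i * x2 + et i * t + ey i * (cyt M * t)) + ly i * z)^2))
       \<partial>lborel) \<partial>lborel)
    = (\<integral>z. std_normal_density z * (N1 z x1 * N2 z x2)
        * (c_t + (\<Sum>i\<in>I. k i * ((e1 i * x1 + e2 i * x2) + lt i * z)^2)) \<partial>lborel)"
    (is "_ = ?rhs") for x1 x2
  proof -
    have "(\<integral>t. (\<integral>z. std_normal_density z * (N1 z x1 * N2 z x2 * Nt z t)
        * (c_y + (\<Sum>i\<in>I. k i * ((e1 i * x1 + e2 i * x2 + et i * t + ey i * (cyt M * t)) + ly i * z)^2))
       \<partial>lborel) \<partial>lborel)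
      = (\<integral>t. (\<integral>z. std_normal_density z * (N1 z x1 * N2 z x2 * normal_density (ct M * z + 0) (sigt M) t)
        * (c_y + (\<Sum>i\<in>I. k i * ((e1 i * x1 + e2 i * x2) + (et i + ey i * cyt M) * t + ly i * z)^2))
       \<partial>lborel) \<partial>lborel)"
      unfolding Nt_def by (intro Bochner_Integration.integral_cong refl) (simp add: algebra_simps)
    also have "\<dots> = ?rhs"
      using N_nonneg N_le bound_nonneg
      by (subst step[OF \<sigma>(3), where K = "bound (sig1 M) * bound (sig2 M)"])
        (auto intro!: mult_mono mult_nonneg_nonneg simp: c_t_def lt_def algebra_simps)
    finally show ?thesis .
  qed
  have x2_level: "(\<integral>x2. (\<integral>z. std_normal_density z * (N1 z x1 * N2 z x2)
        * (c_t + (\<Sum>i\<in>I. k i * ((e1 i * x1 + e2 i * x2) + lt i * z)^2)) \<partial>lborel) \<partial>lborel)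
    = (\<integral>z. std_normal_density z * N1 z x1
        * (c_2 + (\<Sum>i\<in>I. k i * (e1 i * x1 + l2 i * z)^2)) \<partial>lborel)"
    (is "_ = ?rhs") for x1
  proof -
    have "(\<integral>x2. (\<integral>z. std_normal_density z * (N1 z x1 * N2 z x2)
        * (c_t + (\<Sum>i\<in>I. k i * ((e1 i * x1 + e2 i * x2) + lt i * z)^2)) \<partial>lborel) \<partial>lborel)
      = (\<integral>x2. (\<integral>z. std_normal_density z * (N1 z x1 * normal_density (c2 M * z + 0) (sig2 M) x2)
        * (c_t + (\<Sum>i\<in>I. k i * (e1 i * x1 + e2 i * x2 + lt i * z)^2)) \<partial>lborel) \<partial>lborel)"
      unfolding N2_def by simp
    also have "\<dots> = ?rhs"
      using N_nonneg N_le bound_nonneg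
      by (subst step[OF \<sigma>(2), where K = "bound (sig1 M)"])
        (auto simp: c_2_def l2_def algebra_simps)
    finally show ?thesis .
  qed
  have x1_level: "(\<integral>x1. (\<integral>z. std_normal_density z * N1 z x1
        * (c_2 + (\<Sum>i\<in>I. k i * (e1 i * x1 + l2 i * z)^2)) \<partial>lborel) \<partial>lborel)
    = (\<integral>z. std_normal_density z
        * (c_1 + (\<Sum>i\<in>I. k i * (0 + (l2 i + e1 i * c1 M) * z)^2)) \<partial>lborel)"
  proof -
    have "(\<integral>x1. (\<integral>z. std_normal_density z * N1 z x1
        * (c_2 + (\<Sum>i\<in>I. k i * (e1 i * x1 + l2 i * z)^2)) \<partial>lborel) \<partial>lborel)
      = (\<integral>x1. (\<integral>z. std_normal_density z * (1 * normal_density (c1 M * z + 0) (sig1 M) x1)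
        * (c_2 + (\<Sum>i\<in>I. k i * (0 + e1 i * x1 + l2 i * z)^2)) \<partial>lborel) \<partial>lborel)"
      unfolding N1_def by simp
    also have "\<dots> = (\<integral>z. std_normal_density z
        * (c_1 + (\<Sum>i\<in>I. k i * (0 + (l2 i + e1 i * c1 M) * z)^2)) \<partial>lborel)"
      by (subst step[OF \<sigma>(1), where K = 1]) (auto simp: c_1_def)
    finally show ?thesis .
  qed
  have z_level: "(\<integral>z. std_normal_density z
        * (c_1 + (\<Sum>i\<in>I. k i * (0 + (l2 i + e1 i * c1 M) * z)^2)) \<partial>lborel)
      = c_1 + (\<Sum>i\<in>I. k i * (l2 i + e1 i * c1 M)^2)"
    using has_bochner_integral_integral_eq[OF
        has_bochner_integral_normal_sum_squares[OF zero_less_one I, of 0 c_1 k "\<lambda>_. 0"]]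
    by simp
  show ?thesis
    unfolding y_level t_level x2_level x1_level z_level
    by (simp add: c_1_def c_2_def c_t_def c_y_def l2_def lt_def ly_def lin_second_moment_def
        algebra_simps sum.distrib)
qed

lemma elbo_eq:
  fixes x1 x2 t y :: real
  assumes "valid_cevae P"
  defines "m \<equiv> a1 P * x1 + a2 P * x2 + a3 P * t + a4 P * y"
  shows "elbo P x1 x2 t y = ln (sq P) + 1/2 - 2 * ln (2 * pi) - (ln (s1 P) + ln (s2 P) + ln (st P) + ln (sy P))
     - ((x1 - g1 P * m)^2 + (g1 P * sq P)^2) / (2 * (s1 P)^2)
     - ((x2 - g2 P * m)^2 + (g2 P * sq P)^2) / (2 * (s2 P)^2)
     - ((t - gt P * m)^2 + (gt P * sq P)^2) / (2 * (st P)^2)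
     - ((y - gyt P * t - gyz P * m)^2 + (gyz P * sq P)^2) / (2 * (sy P)^2)
     - (m^2 + (sq P)^2) / 2"
proof -
  have s: "0 < s1 P" "0 < s2 P" "0 < st P" "0 < sy P" "0 < sq P"
    using assms(1) by (simp_all add: valid_cevae_def)
  note ln_term = has_bochner_integral_normal_ln_normal[OF _ s(5), of _ m]
  have enc: "enc P x1 x2 t y = normal_density m (sq P)"
    by (simp add: fun_eq_iff enc_def m_def)
  have "has_bochner_integral lborel
      (\<lambda>z. normal_density m (sq P) z * ln (normal_density (g1 P * z + 0) (s1 P) x1)
         + normal_density m (sq P) z * ln (normal_density (g2 P * z + 0) (s2 P) x2)
         + normal_density m (sq P) z * ln (normal_density (gt P * z + 0) (st P) t)
         + normal_density m (sq P) z * ln (normal_density (gyz P * z + gyt P * t) (sy P) y))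
      ((- ln (2 * pi) / 2 - ln (s1 P) - ((x1 - 0 - g1 P * m)^2 + (g1 P * sq P)^2) / (2 * (s1 P)^2))
       + (- ln (2 * pi) / 2 - ln (s2 P) - ((x2 - 0 - g2 P * m)^2 + (g2 P * sq P)^2) / (2 * (s2 P)^2))
       + (- ln (2 * pi) / 2 - ln (st P) - ((t - 0 - gt P * m)^2 + (gt P * sq P)^2) / (2 * (st P)^2))
       + (- ln (2 * pi) / 2 - ln (sy P) - ((y - gyt P * t - gyz P * m)^2 + (gyz P * sq P)^2) / (2 * (sy P)^2)))"
    by (intro has_bochner_integral_add ln_term s)
  then have dec: "(\<integral>z. enc P x1 x2 t y z * dec_loglik P z x1 x2 t y \<partial>lborel)
      = - 2 * ln (2 * pi) - (ln (s1 P) + ln (s2 P) + ln (st P) + ln (sy P))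
        - ((x1 - g1 P * m)^2 + (g1 P * sq P)^2) / (2 * (s1 P)^2)
        - ((x2 - g2 P * m)^2 + (g2 P * sq P)^2) / (2 * (s2 P)^2)
        - ((t - gt P * m)^2 + (gt P * sq P)^2) / (2 * (st P)^2)
        - ((y - gyt P * t - gyz P * m)^2 + (gyz P * sq P)^2) / (2 * (sy P)^2)"
    unfolding enc dec_loglik_def by (simp add: has_bochner_integral_integral_eq algebra_simps)
  moreover have kl: "enc_KL P x1 x2 t y = (m^2 + (sq P)^2 - 1) / 2 - ln (sq P)"
    unfolding enc_KL_def enc by (rule integral_normal_ln_ratio_std_normal[OF s(5)])
  ultimately show ?thesis
    unfolding elbo_def dec kl by (simp add: field_simps)
qed

text \<open>For \<open>(x1, x2, t, y) \<sim> p\<close> and \<open>z \<sim> q(z | x1, x2, t, y)\<close>: \<open>latent_moment\<close> is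
  \<open>E[z\<^sup>2]\<close>, \<open>recon_err_x1\<close> is \<open>E[(x1 - g1 z)\<^sup>2]\<close>, and so on.\<close>
definition latent_moment :: "true_model \<Rightarrow> lin_cevae \<Rightarrow> real" where
  "latent_moment M P = lin_second_moment M (a1 P) (a2 P) (a3 P) (a4 P) + (sq P)^2"

definition recon_err_x1 :: "true_model \<Rightarrow> lin_cevae \<Rightarrow> real" where
  "recon_err_x1 M P = lin_second_moment M (1 - g1 P * a1 P) (- (g1 P * a2 P)) (- (g1 P * a3 P)) (- (g1 P * a4 P))
     + (g1 P * sq P)^2"

definition recon_err_x2 :: "true_model \<Rightarrow> lin_cevae \<Rightarrow> real" where
  "recon_err_x2 M P = lin_second_moment M (- (g2 P * a1 P)) (1 - g2 P * a2 P) (- (g2 P * a3 P)) (- (g2 P * a4 P))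
     + (g2 P * sq P)^2"

definition recon_err_t :: "true_model \<Rightarrow> lin_cevae \<Rightarrow> real" where
  "recon_err_t M P = lin_second_moment M (- (gt P * a1 P)) (- (gt P * a2 P)) (1 - gt P * a3 P) (- (gt P * a4 P))
     + (gt P * sq P)^2"

definition recon_err_y :: "true_model \<Rightarrow> lin_cevae \<Rightarrow> real" where
  "recon_err_y M P = lin_second_moment M (- (gyz P * a1 P)) (- (gyz P * a2 P)) (- gyt P - gyz P * a3 P)
     (1 - gyz P * a4 P) + (gyz P * sq P)^2"

lemma pop_elbo_eq:
  assumes M: "valid_model M" and P: "valid_cevae P"
  shows "pop_elbo M P = ln (sq P) + 1/2 - 2 * ln (2 * pi) - (ln (s1 P) + ln (s2 P) + ln (st P) + ln (sy P))
     - recon_err_x1 M P / (2 * (s1 P)^2) - recon_err_x2 M P / (2 * (s2 P)^2)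
     - recon_err_t M P / (2 * (st P)^2) - recon_err_y M P / (2 * (sy P)^2) - latent_moment M P / 2"
proof -
  define c where "c = ln (sq P) + 1/2 - 2 * ln (2 * pi) - (ln (s1 P) + ln (s2 P) + ln (st P) + ln (sy P))
     - (g1 P * sq P)^2 / (2 * (s1 P)^2) - (g2 P * sq P)^2 / (2 * (s2 P)^2)
     - (gt P * sq P)^2 / (2 * (st P)^2) - (gyz P * sq P)^2 / (2 * (sy P)^2) - (sq P)^2 / 2"
  define k where "k = (!) [- 1 / (2 * (s1 P)^2), - 1 / (2 * (s2 P)^2), - 1 / (2 * (st P)^2),
     - 1 / (2 * (sy P)^2), - 1 / 2]"
  define e1 where "e1 = (!) [1 - g1 P * a1 P, - (g2 P * a1 P), - (gt P * a1 P), - (gyz P * a1 P), a1 P]"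
  define e2 where "e2 = (!) [- (g1 P * a2 P), 1 - g2 P * a2 P, - (gt P * a2 P), - (gyz P * a2 P), a2 P]"
  define et where "et = (!) [- (g1 P * a3 P), - (g2 P * a3 P), 1 - gt P * a3 P, - gyt P - gyz P * a3 P, a3 P]"
  define ey where "ey = (!) [- (g1 P * a4 P), - (g2 P * a4 P), - (gt P * a4 P), 1 - gyz P * a4 P, a4 P]"
  have "elbo P x1 x2 t y = c + (\<Sum>i<5. k i * (e1 i * x1 + e2 i * x2 + et i * t + ey i * y)^2)"
    for x1 x2 t y
    by (simp add: elbo_eq[OF P] numeral_eq_Suc c_def k_def e1_def e2_def et_def ey_def diff_divide_distrib
        add_divide_distrib algebra_simps power2_eq_square)
  then have "pop_elbo M P = c + (\<Sum>i<5. k i * lin_second_moment M (e1 i) (e2 i) (et i) (ey i))"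
    unfolding pop_elbo_def by (simp add: true_expectation_sum_squares[OF M])
  then show ?thesis
    by (simp add: numeral_eq_Suc c_def k_def e1_def e2_def et_def ey_def latent_moment_def
        recon_err_x1_def recon_err_x2_def recon_err_t_def recon_err_y_def diff_divide_distrib add_divide_distrib)
qed

section \<open>The maximal ELBO and its maximisers\<close>

definition snr :: "true_model \<Rightarrow> real" where
  "snr M = (c1 M / sig1 M)^2 + (c2 M / sig2 M)^2 + (ct M / sigt M)^2 + (cyz M / sigy M)^2"

text \<open>The determinant of the covariance matrix of \<open>(x1, x2, t, y)\<close>, by the matrix determinant lemma.\<close>
definition obs_cov_det :: "true_model \<Rightarrow> real" where
  "obs_cov_det M = (sig1 M * sig2 M * sigt M * sigy M)^2 * (1 + snr M)"

lemma obs_cov_det_pos: "valid_model M \<Longrightarrow> 0 < obs_cov_det M"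
  unfolding obs_cov_det_def snr_def valid_model_def by (simp add: add_pos_nonneg)

lemma recon_product_ge:
  assumes M: "valid_model M" and P: "valid_cevae P"
  shows "0 < latent_moment M P" "0 < recon_err_x1 M P" "0 < recon_err_x2 M P"
    "0 < recon_err_t M P" "0 < recon_err_y M P"
    and "(sq P)^2 * obs_cov_det M
      \<le> latent_moment M P * (recon_err_x1 M P * recon_err_x2 M P * recon_err_t M P * recon_err_y M P)"
    and "latent_moment M P * (recon_err_x1 M P * recon_err_x2 M P * recon_err_t M P * recon_err_y M P)
        = (sq P)^2 * obs_cov_det M \<Longrightarrow>
      gyt P = cyt M \<and> (gyz P)^2 * latent_moment M P = (cyz M)^2 \<and> recon_err_y M P = (sigy M)^2"
proof -
  have \<sigma>: "0 < sig1 M" "0 < sig2 M" "0 < sigt M" "0 < sigy M"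
    using M by (simp_all add: valid_model_def)
  have \<sigma>_ne: "sig1 M \<noteq> 0" "sig2 M \<noteq> 0" "sigt M \<noteq> 0" "sigy M \<noteq> 0"
    using \<sigma> by simp_all
  have l: "c1 M / sig1 M \<noteq> 0" "c2 M / sig2 M \<noteq> 0" "ct M / sigt M \<noteq> 0"
    using M by (simp_all add: valid_model_def)
  have S: "0 < (sq P)^2"
    using P by (simp add: valid_cevae_def)
  define l1 where "l1 = c1 M / sig1 M"
  define l2 where "l2 = c2 M / sig2 M"
  define l3 where "l3 = ct M / sigt M"
  define l4 where "l4 = cyz M / sigy M"
  define q1 where "q1 = a1 P * sig1 M"
  define q2 where "q2 = a2 P * sig2 M"
  define q3 where "q3 = (a3 P + a4 P * cyt M) * sigt M"
  define q4 where "q4 = a4 P * sigy M"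
  define h1 where "h1 = g1 P / sig1 M"
  define h2 where "h2 = g2 P / sig2 M"
  define h3 where "h3 = gt P / sigt M"
  define h4 where "h4 = gyz P / sigy M"
  define d where "d = (cyt M - gyt P) * sigt M / sigy M"
  define \<alpha> where "\<alpha> = l1*q1 + l2*q2 + l3*q3 + l4*q4"
  define u where "u = \<alpha>^2 + q1^2 + q2^2 + q3^2 + q4^2 + (sq P)^2"
  define k1 where "k1 = l1*\<alpha> + q1"
  define k2 where "k2 = l2*\<alpha> + q2"
  define k3 where "k3 = l3*\<alpha> + q3"
  define k4 where "k4 = l4*\<alpha> + q4"
  define N1 where "N1 = 1 + l1^2 - 2*h1*k1 + h1^2*u"
  define N2 where "N2 = 1 + l2^2 - 2*h2*k2 + h2^2*u"
  define N3 where "N3 = 1 + l3^2 - 2*h3*k3 + h3^2*u"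
  define N4 where "N4 = (1 + l4^2) + 2*d*l4*l3 + d^2*(1 + l3^2) - 2*h4*(k4 + d*k3) + h4^2*u"
  note key = moment_product_ge[OF S, where ?l1.0 = l1 and ?l2.0 = l2 and ?l3.0 = l3 and ?l4.0 = l4
      and ?q1.0 = q1 and ?q2.0 = q2 and ?q3.0 = q3 and ?q4.0 = q4
      and ?h1.0 = h1 and ?h2.0 = h2 and ?h3.0 = h3 and ?h4.0 = h4 and d = d,
      folded \<alpha>_def, folded k1_def k2_def k3_def k4_def u_def, folded N1_def N2_def N3_def N4_def]
  have lat: "latent_moment M P = u"
    by (simp add: latent_moment_def lin_second_moment_def u_def \<alpha>_def l1_def l2_def l3_def l4_def
        q1_def q2_def q3_def q4_def \<sigma>_ne mult.commute)
  have rec: "recon_err_x1 M P = (sig1 M)^2 * N1" "recon_err_x2 M P = (sig2 M)^2 * N2"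
      "recon_err_t M P = (sigt M)^2 * N3" "recon_err_y M P = (sigy M)^2 * N4"
    unfolding recon_err_x1_def recon_err_x2_def recon_err_t_def recon_err_y_def lin_second_moment_def
      N1_def N2_def N3_def N4_def k1_def k2_def k3_def k4_def u_def \<alpha>_def
      l1_def l2_def l3_def l4_def q1_def q2_def q3_def q4_def h1_def h2_def h3_def h4_def d_def
    using \<sigma> by (simp_all add: field_simps power2_eq_square)
  have det: "obs_cov_det M = (sig1 M * sig2 M * sigt M * sigy M)^2 * (1 + l1^2 + l2^2 + l3^2 + l4^2)"
    by (simp add: obs_cov_det_def snr_def l1_def l2_def l3_def l4_def)
  define var_prod where "var_prod = (sig1 M * sig2 M * sigt M * sigy M)^2"
  have var_prod: "0 < var_prod"
    using \<sigma> by (simp add: var_prod_def)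
  have prod_eq: "latent_moment M P * (recon_err_x1 M P * recon_err_x2 M P * recon_err_t M P * recon_err_y M P)
      = var_prod * (u * (N1 * N2 * N3 * N4))"
    by (simp add: lat rec var_prod_def algebra_simps power2_eq_square)
  have det_eq: "(sq P)^2 * obs_cov_det M = var_prod * ((sq P)^2 * (1 + l1^2 + l2^2 + l3^2 + l4^2))"
    by (simp add: det var_prod_def)
  show "0 < latent_moment M P" "0 < recon_err_x1 M P" "0 < recon_err_x2 M P"
    "0 < recon_err_t M P" "0 < recon_err_y M P"
    using key(1) \<sigma> by (simp_all add: lat rec)
  show "(sq P)^2 * obs_cov_det M
      \<le> latent_moment M P * (recon_err_x1 M P * recon_err_x2 M P * recon_err_t M P * recon_err_y M P)"
    unfolding prod_eq det_eq using key(2) var_prod by simp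
  assume "latent_moment M P * (recon_err_x1 M P * recon_err_x2 M P * recon_err_t M P * recon_err_y M P)
      = (sq P)^2 * obs_cov_det M"
  then have "u * (N1 * N2 * N3 * N4) = (sq P)^2 * (1 + l1^2 + l2^2 + l3^2 + l4^2)"
    unfolding prod_eq det_eq using var_prod by simp
  from key(3)[OF this l[folded l1_def l2_def l3_def]]
  have "d = 0" "h4^2 * u = l4^2" "N4 = 1"
    by simp_all
  then show "gyt P = cyt M \<and> (gyz P)^2 * latent_moment M P = (cyz M)^2 \<and> recon_err_y M P = (sigy M)^2"
    using \<sigma> by (simp add: d_def h4_def l4_def lat rec power_divide field_simps)
qed

lemma ln_add_ratio_ge:
  fixes s V :: real
  assumes s: "0 < s" and V: "0 < V"
  shows "(ln V + 1) / 2 \<le> ln s + V / (2 * s^2)"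
    and "ln s + V / (2 * s^2) = (ln V + 1) / 2 \<Longrightarrow> s^2 = V"
proof -
  define r where "r = V / s^2"
  have r: "0 < r"
    using s V by (simp add: r_def)
  have ln_r: "ln r = ln V - 2 * ln s"
    using s V by (simp add: r_def ln_div ln_mult power2_eq_square)
  have split: "ln s + V / (2 * s^2) - (ln V + 1) / 2 = (r - 1 - ln r) / 2"
    using ln_r by (simp add: r_def field_simps)
  show "(ln V + 1) / 2 \<le> ln s + V / (2 * s^2)"
    using split ln_le_minus_one[OF r] by argo
  assume "ln s + V / (2 * s^2) = (ln V + 1) / 2"
  then have "ln r = r - 1"
    using split by argo
  then have "r = 1"
    using ln_eq_minus_one[OF r] by simp
  then show "s^2 = V"
    using s by (simp add: r_def)
qed

lemma pop_elbo_le: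
  assumes M: "valid_model M" and P: "valid_cevae P"
  shows "pop_elbo M P \<le> - 2 * ln (2 * pi) - 2 - ln (obs_cov_det M) / 2"
    and "pop_elbo M P = - 2 * ln (2 * pi) - 2 - ln (obs_cov_det M) / 2 \<Longrightarrow>
      gyt P = cyt M \<and> (gyz P)^2 = (cyz M)^2 \<and> sy P = sigy M"
proof -
  have s: "0 < s1 P" "0 < s2 P" "0 < st P" "0 < sy P" "0 < sq P"
    using P by (simp_all add: valid_cevae_def)
  define u where "u = latent_moment M P"
  define V1 where "V1 = recon_err_x1 M P"
  define V2 where "V2 = recon_err_x2 M P"
  define Vt where "Vt = recon_err_t M P"
  define Vy where "Vy = recon_err_y M P"
  define D where "D = obs_cov_det M"
  note pos = recon_product_ge(1-5)[OF M P, folded u_def V1_def V2_def Vt_def Vy_def]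
  have D: "0 < D"
    using obs_cov_det_pos[OF M] by (simp add: D_def)
  define T1 where "T1 = ln (s1 P) + V1 / (2 * (s1 P)^2)"
  define T2 where "T2 = ln (s2 P) + V2 / (2 * (s2 P)^2)"
  define Tt where "Tt = ln (st P) + Vt / (2 * (st P)^2)"
  define Ty where "Ty = ln (sy P) + Vy / (2 * (sy P)^2)"
  have slack_V: "(ln V1 + 1) / 2 \<le> T1" "(ln V2 + 1) / 2 \<le> T2" "(ln Vt + 1) / 2 \<le> Tt"
      "(ln Vy + 1) / 2 \<le> Ty"
    unfolding T1_def T2_def Tt_def Ty_def using ln_add_ratio_ge(1) s pos by simp_all
  have "ln ((sq P)^2 * D) \<le> ln (u * (V1 * V2 * Vt * Vy))"
    using recon_product_ge(6)[OF M P, folded u_def V1_def V2_def Vt_def Vy_def D_def] s(5) D pos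
    by (simp add: zero_less_mult_iff)
  then have slack_prod: "2 * ln (sq P) + ln D \<le> ln u + ln V1 + ln V2 + ln Vt + ln Vy"
    using s(5) D pos by (simp add: ln_mult ln_realpow)
  have slack_u: "ln u \<le> u - 1"
    using ln_le_minus_one[OF pos(1)] .
  have pop: "pop_elbo M P = ln (sq P) + 1/2 - 2 * ln (2 * pi) - T1 - T2 - Tt - Ty - u / 2"
    using pop_elbo_eq[OF M P] by (simp add: u_def V1_def V2_def Vt_def Vy_def T1_def T2_def Tt_def Ty_def)
  show "pop_elbo M P \<le> - 2 * ln (2 * pi) - 2 - ln (obs_cov_det M) / 2"
    unfolding pop D_def[symmetric] using slack_V slack_prod slack_u by argo
  assume "pop_elbo M P = - 2 * ln (2 * pi) - 2 - ln (obs_cov_det M) / 2"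
  then have tight: "Ty = (ln Vy + 1) / 2" "ln u = u - 1"
      "2 * ln (sq P) + ln D = ln u + ln V1 + ln V2 + ln Vt + ln Vy"
    unfolding pop D_def[symmetric] using slack_V slack_prod slack_u by argo+
  have "u = 1"
    using tight(2) ln_eq_minus_one[OF pos(1)] by simp
  have "ln ((sq P)^2 * D) = ln (u * (V1 * V2 * Vt * Vy))"
    using tight(3) s(5) D pos by (simp add: ln_mult ln_realpow)
  then have "u * (V1 * V2 * Vt * Vy) = (sq P)^2 * D"
    using s(5) D pos by (simp add: zero_less_mult_iff)
  from recon_product_ge(7)[OF M P, folded u_def V1_def V2_def Vt_def Vy_def D_def, OF this]
  have "gyt P = cyt M" "(gyz P)^2 = (cyz M)^2" "Vy = (sigy M)^2"
    using \<open>u = 1\<close> by simp_all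
  moreover have "(sy P)^2 = (sigy M)^2"
    using ln_add_ratio_ge(2)[OF s(4) pos(5)] tight(1) \<open>Vy = (sigy M)^2\<close> by (simp add: Ty_def)
  then have "sy P = sigy M"
    using s(4) M by (simp add: valid_model_def power2_eq_iff_nonneg)
  ultimately show "gyt P = cyt M \<and> (gyz P)^2 = (cyz M)^2 \<and> sy P = sigy M"
    by simp
qed

text \<open>The CEVAE whose decoder is the true model and whose encoder is the exact posterior
  \<open>p(z | x1, x2, t, y)\<close>.\<close>
definition true_posterior_cevae :: "true_model \<Rightarrow> lin_cevae" where
  "true_posterior_cevae M = (let S = 1 / (1 + snr M) in
     \<lparr>g1 = c1 M, g2 = c2 M, gt = ct M, gyz = cyz M, gyt = cyt M,
      s1 = sig1 M, s2 = sig2 M, st = sigt M, sy = sigy M,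
      a1 = S * c1 M / (sig1 M)^2, a2 = S * c2 M / (sig2 M)^2,
      a3 = S * (ct M / (sigt M)^2 - cyz M * cyt M / (sigy M)^2), a4 = S * cyz M / (sigy M)^2,
      sq = sqrt S\<rparr>)"

lemma valid_true_posterior_cevae: "valid_model M \<Longrightarrow> valid_cevae (true_posterior_cevae M)"
  by (simp add: true_posterior_cevae_def valid_cevae_def valid_model_def snr_def add_pos_nonneg)

lemma true_posterior_cevae_moments:
  assumes M: "valid_model M"
  defines "Q \<equiv> true_posterior_cevae M"
  shows "latent_moment M Q = 1" "recon_err_x1 M Q = (sig1 M)^2" "recon_err_x2 M Q = (sig2 M)^2"
    "recon_err_t M Q = (sigt M)^2" "recon_err_y M Q = (sigy M)^2"
proof -
  define S where "S = 1 / (1 + snr M)"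
  have \<sigma>: "0 < sig1 M" "0 < sig2 M" "0 < sigt M" "0 < sigy M"
    using M by (simp_all add: valid_model_def)
  have snr: "0 \<le> snr M"
    by (simp add: snr_def)
  have S: "0 < S" "S * (1 + snr M) = 1"
    using snr by (simp_all add: S_def)
  have Q: "g1 Q = c1 M" "g2 Q = c2 M" "gt Q = ct M" "gyz Q = cyz M" "gyt Q = cyt M"
    "a1 Q = S * c1 M / (sig1 M)^2" "a2 Q = S * c2 M / (sig2 M)^2"
    "a3 Q = S * (ct M / (sigt M)^2 - cyz M * cyt M / (sigy M)^2)" "a4 Q = S * cyz M / (sigy M)^2"
    "(sq Q)^2 = S"
    using S(1) by (simp_all add: Q_def true_posterior_cevae_def Let_def S_def)
  define load where "load = a1 Q * c1 M + a2 Q * c2 M + (a3 Q + a4 Q * cyt M) * ct M + a4 Q * cyz M"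
  define noise where "noise = (a1 Q * sig1 M)^2 + (a2 Q * sig2 M)^2 + ((a3 Q + a4 Q * cyt M) * sigt M)^2
      + (a4 Q * sigy M)^2"
  have load: "load = S * snr M"
    unfolding load_def Q snr_def using \<sigma> by (simp add: field_simps power2_eq_square)
  have noise: "noise = S^2 * snr M"
    unfolding noise_def Q snr_def using \<sigma> by (simp add: field_simps power2_eq_square)
  have cross: "a1 Q * (sig1 M)^2 = S * c1 M" "a2 Q * (sig2 M)^2 = S * c2 M"
      "(a3 Q + a4 Q * cyt M) * (sigt M)^2 = S * ct M" "a4 Q * (sigy M)^2 = S * cyz M"
    unfolding Q using \<sigma> by (simp_all add: field_simps)
  have recon: "(c - c * load)^2 + \<sigma>^2 - 2 * c * (S * c) + c^2 * noise + c^2 * S = \<sigma>^2" for c \<sigma> :: real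
  proof -
    have "(c - c * load)^2 - 2 * c * (S * c) + c^2 * noise + c^2 * S
        = c^2 * (S * (1 + snr M) - 1) * (S * (1 + snr M) - 1 - S)"
      unfolding load noise by (simp add: algebra_simps power2_eq_square)
    then show ?thesis
      using S(2) by simp
  qed
  have "latent_moment M Q = load^2 + noise + S"
    by (simp add: latent_moment_def lin_second_moment_def load_def noise_def Q(10))
  also have "\<dots> = S * (S * (1 + snr M)) * snr M + S"
    by (simp add: load noise algebra_simps power2_eq_square)
  also have "\<dots> = S * snr M + S"
    by (simp only: S(2) mult_1_right)
  finally show "latent_moment M Q = 1"
    using S(2) by (simp add: algebra_simps)
  note expand = recon_err_x1_def recon_err_x2_def recon_err_t_def recon_err_y_def lin_second_moment_def
    load_def noise_def Q(1-5) Q(10)[unfolded power2_eq_square] power_mult_distrib algebra_simps power2_eq_square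
  have "recon_err_x1 M Q = (c1 M - c1 M * load)^2 + (sig1 M)^2 - 2 * c1 M * (a1 Q * (sig1 M)^2)
      + (c1 M)^2 * noise + (c1 M)^2 * S"
    by (simp add: expand)
  then show "recon_err_x1 M Q = (sig1 M)^2"
    unfolding cross recon .
  have "recon_err_x2 M Q = (c2 M - c2 M * load)^2 + (sig2 M)^2 - 2 * c2 M * (a2 Q * (sig2 M)^2)
      + (c2 M)^2 * noise + (c2 M)^2 * S"
    by (simp add: expand)
  then show "recon_err_x2 M Q = (sig2 M)^2"
    unfolding cross recon .
  have "recon_err_t M Q = (ct M - ct M * load)^2 + (sigt M)^2 - 2 * ct M * ((a3 Q + a4 Q * cyt M) * (sigt M)^2)
      + (ct M)^2 * noise + (ct M)^2 * S"
    by (simp add: expand)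
  then show "recon_err_t M Q = (sigt M)^2"
    unfolding cross recon .
  have "recon_err_y M Q = (cyz M - cyz M * load)^2 + (sigy M)^2 - 2 * cyz M * (a4 Q * (sigy M)^2)
      + (cyz M)^2 * noise + (cyz M)^2 * S"
    by (simp add: expand)
  then show "recon_err_y M Q = (sigy M)^2"
    unfolding cross recon .
qed

lemma pop_elbo_true_posterior_cevae:
  assumes M: "valid_model M"
  shows "pop_elbo M (true_posterior_cevae M) = - 2 * ln (2 * pi) - 2 - ln (obs_cov_det M) / 2"
proof -
  define Q where "Q = true_posterior_cevae M"
  have \<sigma>: "0 < sig1 M" "0 < sig2 M" "0 < sigt M" "0 < sigy M"
    using M by (simp_all add: valid_model_def)
  have snr: "0 \<le> snr M"
    by (simp add: snr_def)
  have valid_Q: "valid_cevae Q"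
    using valid_true_posterior_cevae[OF M] by (simp add: Q_def)
  then have "ln (sq Q) = ln ((sq Q)^2) / 2"
    by (simp add: valid_cevae_def ln_realpow)
  then have ln_sq: "ln (sq Q) = - ln (1 + snr M) / 2"
    using snr by (simp add: Q_def true_posterior_cevae_def ln_div)
  have ln_det: "ln (obs_cov_det M) = 2 * (ln (sig1 M) + ln (sig2 M) + ln (sigt M) + ln (sigy M)) + ln (1 + snr M)"
    using \<sigma> snr by (simp add: obs_cov_det_def ln_mult ln_realpow add_pos_nonneg)
  have "s1 Q = sig1 M" "s2 Q = sig2 M" "st Q = sigt M" "sy Q = sigy M"
    by (simp_all add: Q_def true_posterior_cevae_def)
  then show ?thesis
    unfolding Q_def[symmetric] pop_elbo_eq[OF M valid_Q] true_posterior_cevae_moments[OF M, folded Q_def] ln_sq ln_det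
    using \<sigma> by (simp add: field_simps)
qed

lemma cevae_do_eq_true_do:
  assumes "gyt P = cyt M" "(gyz P)^2 = (cyz M)^2" "sy P = sigy M"
  shows "cevae_do P t y = true_do M t y"
proof (cases "gyz P = cyz M")
  case True
  then show ?thesis
    using assms by (simp add: cevae_do_def true_do_def)
next
  case False
  then have "gyz P = - cyz M"
    using assms(2) by (simp add: power2_eq_iff)
  then show ?thesis
    using assms integral_std_normal_reflect[of "\<lambda>z. normal_density (cyz M * z + cyt M * t) (sigy M) y"]
    by (simp add: cevae_do_def true_do_def)
qed

theorem proposition1:
  fixes M :: true_model and P :: lin_cevae
  assumes "valid_model M"
    and "valid_cevae P"
    and "\<forall>Q. valid_cevae Q \<longrightarrow> pop_elbo M Q \<le> pop_elbo M P"
  shows "\<forall>t y. cevae_do P t y = true_do M t y"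
proof -
  have "pop_elbo M (true_posterior_cevae M) \<le> pop_elbo M P"
    using assms(3) valid_true_posterior_cevae[OF assms(1)] by blast
  then have "pop_elbo M P = - 2 * ln (2 * pi) - 2 - ln (obs_cov_det M) / 2"
    using pop_elbo_le(1)[OF assms(1,2)] pop_elbo_true_posterior_cevae[OF assms(1)] by linarith
  then have "gyt P = cyt M \<and> (gyz P)^2 = (cyz M)^2 \<and> sy P = sigy M"
    by (rule pop_elbo_le(2)[OF assms(1,2)])
  then show ?thesis
    using cevae_do_eq_true_do by blast
qed

end
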